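(* In the blowup/base-change setting below, fix $p\in\{0,\dots,P-1\}$. Write $\Delta'=\sum_{m=1}^Nc_mM_m$ with $c_m\in\mathbb C^*$ and distinct monomials $M_m=t^{\tau_m}\big(\prod_{q=0}^Pe_q^{\epsilon_{q,m}}\big)s^{\sigma_m}$. Define $\epsilon_p^{(0)}:=\min\{\epsilon_{p,m}:\epsilon_{p+1,m}=0\}$ and $\epsilon_p^{(1)}:=\min\{\epsilon_{p+1,m}:\epsilon_{p,m}=0\}$, and for a positive integer $k$ define on $[0,k]$ the linear functions $\bar{\mathfrak L}_m(r):=(k-r)\epsilon_{p,m}+r\,\epsilon_{p+1,m}$ and $\bar{\mathfrak M}(r):=\min_{1\le m\le N}\bar{\mathfrak L}_m(r)$; let $\mathfrak M$ denote $\bar{\mathfrak M}$ for $k=1$, a function on $[0,1]$. (1) If there are special fibers at $B^{p,p+1}$, then $\epsilon_p^{(0)}>0$ and $\epsilon_p^{(1)}>0$. (2) $\bar n_{kp+r}=(k-r)n_p+r\,n_{p+1}+\bar{\mathfrak M}(r)$ for $r=0,1,\dots,k$. (3) $\bar{\mathfrak M}$ is piecewise linear and concave, $\bar{\mathfrak M}(kr)=k\,\mathfrak M(r)$ for $r\in[0,1]$, and $\mathfrak M(0)=\mathfrak M(1)=0$. The points $0<\mathcal R_1<\dots<\mathcal R_{\mathcal N-1}<1$ at which $\mathfrak M$ is not locally linear are rational numbers. (4) There are no special fibers at $\bar B^{\bar p,\bar p+1}$ for all $\bar p=kp,\dots,k(p+1)-1$ if and only if $k\mathcal R_\iota\in\mathbb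 Z$ for all $\iota=1,\dots,\mathcal N-1$, i.e. if and only if $k$ is a multiple of $k_0^{(p)}$, the smallest positive integer with this property (equal to the least common multiple of the denominators of the $\mathcal R_\iota$ in lowest terms).
   Context: Blowup setting. Let $f=f(s,t;u)$, $g=g(s,t;u)$ be complex polynomials, homogeneous in $(s,t)$ of degrees $8$ and $12$, defining a family of Weierstrass models $y^2=x^3+fxz^4+gz^6$ over $\mathbb P^1_{[s:t]}$ with parameter $u$; $\Delta:=4f^3+27g^2$. Let $a,b$ be the vanishing orders in $s$ at $s=0$ of $f,g$ for generic $u\ne0$ (not both $a\ge4$, $b\ge6$), and write $f=s^a\sum_i\mathcal F_i\,s^it^{8-a-i}$, $g=s^b\sum_j\mathcal G_j\,s^jt^{12-b-j}$. Assume the 3-fold vanishing orders of $(f,g,\Delta)$ at $(u,s)=(0,0)$ (largest $N$ with the function in $(u,s)^N$, $t=1$) are $(4+\alpha,6+\beta,12+\gamma)$ with $\alpha=0$ or $\beta=0$, and that this persists under all base changes $u\mapsto u^\ell$ (Classes 1–4). Blowup chain: $e_0:=u$; the $p$-th blowup substitutes $e_{p-1}\mapsto e_{p-1}e_p$, $s\mapsto se_p$ and divides $f,g,\Delta$ by $e_p^4,e_p^6,e_p^{12}$; $\mu_{q,i}$, $\nu_{q,j}$ are the vanishing orders in $e_q$ of the coefficients $\mathcal F_i(e_0,\dots)$, $\mathcal G_j(e_0,\dots)$; $P$ is the first number of blowups for which some $i<4-a$ with $\mathcal F_i\neq0$ has $\mu_{P,i}<4-a-i$ or some $j<6-b$ with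 $\mathcal G_j\ne0$ has $\nu_{P,j}<6-b-j$. Standing assumption: there is such an $i$ with $\mu_{P,i}=0$ or such a $j$ with $\nu_{P,j}=0$ (achievable by a preliminary base change). Base components $B^p=\{e_p=0\}$ form a chain, $B^{p,p+1}=\{e_p=e_{p+1}=0\}$. $n_p$ is the largest power of $e_p$ dividing $\Delta$ and $\Delta=\prod_qe_q^{n_q}\Delta'$. There is a special fiber at $B^{p,p+1}$ iff $\Delta'$ vanishes there, i.e. every monomial of $\Delta'$ is divisible by $e_p$ or $e_{p+1}$. Base change: for a positive integer $k$, the barred configuration $\bar{\mathcal Y}$ is obtained by substituting $u\mapsto u^k$ in $f,g$ and then performing the blowup chain, which now consists of $\bar P=kP$ blowups with coordinates $\bar e_0,\dots,\bar e_{\bar P}$; $\bar B^{\bar p}$, $\bar B^{\bar p,\bar p+1}$, $\bar n_{\bar p}$, $\bar\Delta'$ are defined analogously. *)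

theory Defs
  imports "HOL-Analysis.Analysis" "HOL-Library.Poly_Mapping" "HOL-Library.Extended_Nat"
begin

text \<open>Polynomials in the variables s (index 0), t (index 1), e_q (index q+2), with e_0 = u.
  A polynomial is a finitely supported map from exponent vectors to complex coefficients.\<close>

type_synonym mpoly = "(nat \<Rightarrow>\<^sub>0 nat) \<Rightarrow>\<^sub>0 complex"

definition evar :: "nat \<Rightarrow> nat" where "evar q = q + 2"

definition remap :: "((nat \<Rightarrow>\<^sub>0 nat) \<Rightarrow> (nat \<Rightarrow>\<^sub>0 nat)) \<Rightarrow> mpoly \<Rightarrow> mpoly" where
  "remap T h = (\<Sum>\<alpha>\<in>Poly_Mapping.keys h. Poly_Mapping.single (T \<alpha>) (Poly_Mapping.lookup h \<alpha>))"

text \<open>p-th blowup (p >= 1): e_{p-1} -> e_{p-1} e_p, s -> s e_p, then divide by e_p^d.\<close>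
definition blowup_step :: "nat \<Rightarrow> nat \<Rightarrow> mpoly \<Rightarrow> mpoly" where
  "blowup_step p d h = remap (\<lambda>\<alpha>. (\<alpha> + Poly_Mapping.single (evar p)
        (Poly_Mapping.lookup \<alpha> (evar (p - 1)) + Poly_Mapping.lookup \<alpha> 0))
      - Poly_Mapping.single (evar p) d) h"

fun chain :: "nat \<Rightarrow> mpoly \<Rightarrow> nat \<Rightarrow> mpoly" where
  "chain d h 0 = h"
| "chain d h (Suc p) = blowup_step (Suc p) d (chain d h p)"

definition Disc :: "mpoly \<Rightarrow> mpoly \<Rightarrow> mpoly" where
  "Disc f g = 4 * f ^ 3 + 27 * g ^ 2"

text \<open>Base change u -> u^k.\<close>
definition base_change :: "nat \<Rightarrow> mpoly \<Rightarrow> mpoly" where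
  "base_change k h = remap (\<lambda>\<alpha>. \<alpha> + Poly_Mapping.single 2 ((k - 1) * Poly_Mapping.lookup \<alpha> 2)) h"

definition s_order :: "mpoly \<Rightarrow> enat" where
  "s_order h = (if h = 0 then \<infinity> else enat (Min ((\<lambda>\<alpha>. Poly_Mapping.lookup \<alpha> 0) ` Poly_Mapping.keys h)))"

text \<open>3-fold vanishing order at (u,s)=(0,0), t=1, after base change u -> u^l.\<close>
definition ord3 :: "nat \<Rightarrow> mpoly \<Rightarrow> enat" where
  "ord3 l h = (if h = 0 then \<infinity> else
     enat (Min ((\<lambda>\<alpha>. Poly_Mapping.lookup \<alpha> 0 + l * Poly_Mapping.lookup \<alpha> 2) ` Poly_Mapping.keys h)))"

definition Fnz :: "mpoly \<Rightarrow> nat \<Rightarrow> bool" where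
  "Fnz h \<sigma> = (\<exists>\<alpha>\<in>Poly_Mapping.keys h. Poly_Mapping.lookup \<alpha> 0 = \<sigma>)"

definition mu :: "nat \<Rightarrow> mpoly \<Rightarrow> nat \<Rightarrow> nat \<Rightarrow> nat" where
  "mu d h q \<sigma> = Min ((\<lambda>\<alpha>. Poly_Mapping.lookup \<alpha> (evar q)) `
      {\<alpha>\<in>Poly_Mapping.keys (chain d h q). Poly_Mapping.lookup \<alpha> 0 = \<sigma>})"

definition stop_cond :: "mpoly \<Rightarrow> mpoly \<Rightarrow> nat \<Rightarrow> bool" where
  "stop_cond f g q =
     ((\<exists>\<sigma><4. Fnz f \<sigma> \<and> mu 4 f q \<sigma> < 4 - \<sigma>) \<or> (\<exists>\<sigma><6. Fnz g \<sigma> \<and> mu 6 g q \<sigma> < 6 - \<sigma>))"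

definition nvec :: "mpoly \<Rightarrow> nat \<Rightarrow> nat" where
  "nvec D q = Min ((\<lambda>\<alpha>. Poly_Mapping.lookup \<alpha> (evar q)) ` Poly_Mapping.keys D)"

definition Dprime :: "nat \<Rightarrow> mpoly \<Rightarrow> mpoly" where
  "Dprime Q D = remap (\<lambda>\<alpha>. \<alpha> - (\<Sum>q\<le>Q. Poly_Mapping.single (evar q) (nvec D q))) D"

text \<open>Special fiber at {e_p = e_{p+1} = 0}: every monomial of D' is divisible by e_p or e_{p+1}.\<close>
definition special_fiber :: "mpoly \<Rightarrow> nat \<Rightarrow> bool" where
  "special_fiber D' p = (\<forall>\<alpha>\<in>Poly_Mapping.keys D'.
      0 < Poly_Mapping.lookup \<alpha> (evar p) \<or> 0 < Poly_Mapping.lookup \<alpha> (evar (p + 1)))"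

definition locally_linear_at :: "(real \<Rightarrow> real) \<Rightarrow> real \<Rightarrow> bool" where
  "locally_linear_at F x = (\<exists>\<epsilon>>0. \<exists>c d. \<forall>z. \<bar>z - x\<bar> < \<epsilon> \<longrightarrow> F z = c * z + d)"

definition piecewise_linear_on :: "real \<Rightarrow> real \<Rightarrow> (real \<Rightarrow> real) \<Rightarrow> bool" where
  "piecewise_linear_on a b F = (\<exists>S. finite S \<and> a \<in> S \<and> b \<in> S \<and> S \<subseteq> {a..b} \<and>
     (\<forall>x\<in>S. \<forall>y\<in>S. x < y \<and> {x<..<y} \<inter> S = {} \<longrightarrow> (\<exists>c d. \<forall>z\<in>{x..y}. F z = c * z + d)))"

definition rat_denom :: "real \<Rightarrow> nat" where
  "rat_denom x = nat (snd (quotient_of (THE q. x = of_rat q)))"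

end

theory Submission
  imports Defs
begin

text \<open>Every blowup acts on the monomials of \<open>\<Delta>\<close> by a monomial substitution, so the exponent of
  \<open>e\<^sub>j\<close> in the image of \<open>s\<^sup>a u\<^sup>c\<close> after the chain is the affine function \<open>c + j a - 12 j\<close> of \<open>j\<close>.
  Base change \<open>u \<mapsto> u\<^sup>k\<close> replaces \<open>c\<close> by \<open>k c\<close>, so the exponent of \<open>e\<^sub>k\<^sub>p\<^sub>+\<^sub>r\<close> interpolates linearly
  between those of \<open>e\<^sub>p\<close> and \<open>e\<^sub>p\<^sub>+\<^sub>1\<close>; dividing out the common powers turns the orders \<open>n\<^sub>k\<^sub>p\<^sub>+\<^sub>r\<close>
  into the minimum \<open>M(r)\<close> of the lines \<open>L\<^sub>m\<close>.  A minimum of finitely many lines with rational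
  coefficients is concave and piecewise linear with rational kinks, and there is no special fiber
  between \<open>e\<^sub>k\<^sub>p\<^sub>+\<^sub>r\<close> and \<open>e\<^sub>k\<^sub>p\<^sub>+\<^sub>r\<^sub>+\<^sub>1\<close> exactly when one line is minimal at both \<open>r/k\<close> and
  \<open>(r+1)/k\<close>, i.e. when the minimum for \<open>k = 1\<close> has no kink strictly between them.\<close>

section \<open>Monomial substitutions\<close>

lemma poly_mapping_sum_single:
  "(h::'a \<Rightarrow>\<^sub>0 'b::comm_monoid_add) = (\<Sum>\<alpha>\<in>Poly_Mapping.keys h. Poly_Mapping.single \<alpha> (Poly_Mapping.lookup h \<alpha>))"
proof (rule poly_mapping_eqI)
  fix k
  show "Poly_Mapping.lookup h k = Poly_Mapping.lookup (\<Sum>\<alpha>\<in>Poly_Mapping.keys h. Poly_Mapping.single \<alpha> (Poly_Mapping.lookup h \<alpha>)) k"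
    by (cases "k \<in> Poly_Mapping.keys h") (auto simp: lookup_sum lookup_single when_def in_keys_iff)
qed

lemma remap_eq_sum_superset:
  assumes "finite S" "Poly_Mapping.keys h \<subseteq> S"
  shows "remap T h = (\<Sum>\<alpha>\<in>S. Poly_Mapping.single (T \<alpha>) (Poly_Mapping.lookup h \<alpha>))"
  unfolding remap_def using assms by (intro sum.mono_neutral_left) (auto simp: in_keys_iff)

lemma remap_add: "remap T (h1 + h2) = remap T h1 + remap T h2"
proof -
  let ?S = "Poly_Mapping.keys h1 \<union> Poly_Mapping.keys h2"
  have "finite ?S" "Poly_Mapping.keys (h1 + h2) \<subseteq> ?S" by (simp_all add: keys_add)
  then show ?thesis
    by (simp add: remap_eq_sum_superset[of ?S] lookup_add single_add sum.distrib)
qed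

lemma remap_zero [simp]: "remap T 0 = 0"
  by (simp add: remap_def)

lemma remap_sum: "remap T (sum F S) = (\<Sum>x\<in>S. remap T (F x))"
  by (induction S rule: infinite_finite_induct) (auto simp: remap_add)

lemma remap_single [simp]: "remap T (Poly_Mapping.single \<alpha> c) = Poly_Mapping.single (T \<alpha>) c"
  by (cases "c = 0") (auto simp: remap_def)

lemma remap_mult:
  assumes hom: "\<And>a b. T (a + b) = T a + T b"
  shows "remap T (p * q) = remap T p * remap T q"
proof -
  have "p * q = (\<Sum>\<alpha>\<in>Poly_Mapping.keys p. \<Sum>\<beta>\<in>Poly_Mapping.keys q.
      Poly_Mapping.single (\<alpha> + \<beta>) (Poly_Mapping.lookup p \<alpha> * Poly_Mapping.lookup q \<beta>))"
    by (subst poly_mapping_sum_single[of p], subst poly_mapping_sum_single[of q])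
       (simp add: sum_distrib_left sum_distrib_right mult_single, rule sum.swap)
  then have "remap T (p * q) = (\<Sum>\<alpha>\<in>Poly_Mapping.keys p. \<Sum>\<beta>\<in>Poly_Mapping.keys q.
      Poly_Mapping.single (T \<alpha> + T \<beta>) (Poly_Mapping.lookup p \<alpha> * Poly_Mapping.lookup q \<beta>))"
    by (simp add: remap_sum hom)
  also have "\<dots> = remap T p * remap T q"
    unfolding remap_def by (simp add: sum_distrib_left sum_distrib_right mult_single, rule sum.swap)
  finally show ?thesis .
qed

lemma remap_numeral:
  assumes "T 0 = 0"
  shows "remap T (numeral n :: mpoly) = numeral n"
  using assms remap_single[of T 0 "numeral n"] by simp

lemma keys_remap:
  assumes "inj_on T (Poly_Mapping.keys h)"
  shows "Poly_Mapping.keys (remap T h) = T ` Poly_Mapping.keys h"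
proof -
  have lookup_remap: "Poly_Mapping.lookup (remap T h) \<beta>
      = (\<Sum>\<alpha>\<in>Poly_Mapping.keys h. (Poly_Mapping.lookup h \<alpha> when T \<alpha> = \<beta>))" for \<beta>
    unfolding remap_def by (simp add: lookup_sum lookup_single)
  have "Poly_Mapping.lookup (remap T h) (T \<alpha>) = Poly_Mapping.lookup h \<alpha>"
    if "\<alpha> \<in> Poly_Mapping.keys h" for \<alpha>
  proof -
    have "(\<Sum>\<alpha>'\<in>Poly_Mapping.keys h. (Poly_Mapping.lookup h \<alpha>' when T \<alpha>' = T \<alpha>))
        = (\<Sum>\<alpha>'\<in>{\<alpha>}. (Poly_Mapping.lookup h \<alpha>' when T \<alpha>' = T \<alpha>))"
      using that assms by (intro sum.mono_neutral_right) (auto simp: inj_on_def)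
    then show ?thesis by (simp add: lookup_remap)
  qed
  moreover have "Poly_Mapping.lookup (remap T h) \<beta> = 0" if "\<beta> \<notin> T ` Poly_Mapping.keys h" for \<beta>
    using that by (auto simp: lookup_remap intro!: sum.neutral)
  ultimately show ?thesis
    by (auto simp: in_keys_iff)
qed

section \<open>Closed form of the blowup chain\<close>

text \<open>For a monomial \<open>\<alpha> = s\<^sup>a t\<^sup>b u\<^sup>c\<close>, after \<open>Q\<close> blowups the exponent of \<open>e\<^sub>j\<close> (\<open>1 \<le> j \<le> Q\<close>)
  is \<open>c + j a - d j\<close>; this stays a genuine (non-truncated) difference exactly when the
  polynomial is \<^emph>\<open>admissible\<close> below.\<close>

definition blowup_exponent :: "nat \<Rightarrow> (nat \<Rightarrow>\<^sub>0 nat) \<Rightarrow> nat \<Rightarrow> nat" where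
  "blowup_exponent d \<alpha> j = Poly_Mapping.lookup \<alpha> 2 + j * Poly_Mapping.lookup \<alpha> 0 - d * j"

definition blowup_monomial :: "nat \<Rightarrow> nat \<Rightarrow> (nat \<Rightarrow>\<^sub>0 nat) \<Rightarrow> (nat \<Rightarrow>\<^sub>0 nat)" where
  "blowup_monomial d Q \<alpha> = \<alpha> + (\<Sum>j\<in>{1..Q}. Poly_Mapping.single (evar j) (blowup_exponent d \<alpha> j))"

definition admissible :: "nat \<Rightarrow> nat \<Rightarrow> mpoly \<Rightarrow> bool" where
  "admissible d Q h = (\<forall>\<alpha>\<in>Poly_Mapping.keys h. (\<forall>v\<ge>3. Poly_Mapping.lookup \<alpha> v = 0) \<and>
      d * Q \<le> Poly_Mapping.lookup \<alpha> 2 + Q * Poly_Mapping.lookup \<alpha> 0)"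

lemma lookup_blowup_monomial:
  "Poly_Mapping.lookup (blowup_monomial d Q \<alpha>) v
    = Poly_Mapping.lookup \<alpha> v + (if 3 \<le> v \<and> v \<le> Q + 2 then blowup_exponent d \<alpha> (v - 2) else 0)"
proof -
  have "(\<Sum>j\<in>{1..Q}. Poly_Mapping.lookup (Poly_Mapping.single (evar j) (blowup_exponent d \<alpha> j)) v)
        = (if 3 \<le> v \<and> v \<le> Q + 2 then blowup_exponent d \<alpha> (v - 2) else 0)"
  proof (cases "3 \<le> v \<and> v \<le> Q + 2")
    case True
    then have "evar (v - 2) = v" unfolding evar_def by arith
    moreover have "(\<Sum>j\<in>{1..Q}. Poly_Mapping.lookup (Poly_Mapping.single (evar j) (blowup_exponent d \<alpha> j)) v)
        = (\<Sum>j\<in>{v - 2}. Poly_Mapping.lookup (Poly_Mapping.single (evar j) (blowup_exponent d \<alpha> j)) v)"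
      using True by (intro sum.mono_neutral_right) (auto simp: lookup_single evar_def when_def)
    ultimately show ?thesis using True by simp
  qed (auto simp: lookup_single evar_def when_def intro!: sum.neutral)
  then show ?thesis by (simp add: blowup_monomial_def lookup_add lookup_sum)
qed

lemma lookup_blowup_monomial_evar:
  assumes "\<forall>v\<ge>3. Poly_Mapping.lookup \<alpha> v = 0" "j \<le> Q"
  shows "Poly_Mapping.lookup (blowup_monomial d Q \<alpha>) (evar j) = blowup_exponent d \<alpha> j"
  using assms by (cases j) (auto simp: lookup_blowup_monomial evar_def blowup_exponent_def numeral_2_eq_2)

lemma lookup_blowup_monomial_low:
  "v < 3 \<Longrightarrow> Poly_Mapping.lookup (blowup_monomial d Q \<alpha>) v = Poly_Mapping.lookup \<alpha> v"
  by (simp add: lookup_blowup_monomial)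

lemma inj_blowup_monomial: "inj (blowup_monomial d Q)"
proof
  fix x y assume "blowup_monomial d Q x = blowup_monomial d Q y"
  then have eq: "\<And>v. Poly_Mapping.lookup (blowup_monomial d Q x) v = Poly_Mapping.lookup (blowup_monomial d Q y) v"
    by simp
  have "Poly_Mapping.lookup x 0 = Poly_Mapping.lookup y 0" "Poly_Mapping.lookup x 2 = Poly_Mapping.lookup y 2"
    using eq[of 0] eq[of 2] by (simp_all add: lookup_blowup_monomial_low)
  then have "blowup_exponent d x = blowup_exponent d y"
    by (simp add: blowup_exponent_def fun_eq_iff)
  then have "Poly_Mapping.lookup x v = Poly_Mapping.lookup y v" for v
    using eq[of v] by (simp add: lookup_blowup_monomial split: if_splits)
  then show "x = y" by (simp add: poly_mapping_eqI)
qed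

lemma admissible_imp_le:
  assumes "admissible d Q h" "j \<le> Q" "\<alpha> \<in> Poly_Mapping.keys h"
  shows "d * j \<le> Poly_Mapping.lookup \<alpha> 2 + j * Poly_Mapping.lookup \<alpha> 0"
proof (cases "d \<le> Poly_Mapping.lookup \<alpha> 0")
  case True
  then show ?thesis by (metis mult.commute mult_le_mono1 trans_le_add2)
next
  case False
  obtain m where m: "Q = j + m" using assms(2) le_Suc_ex by blast
  have "d * Q \<le> Poly_Mapping.lookup \<alpha> 2 + Q * Poly_Mapping.lookup \<alpha> 0"
    using assms by (auto simp: admissible_def)
  moreover have "d * Q = d * j + d * m" "Q * Poly_Mapping.lookup \<alpha> 0
      = j * Poly_Mapping.lookup \<alpha> 0 + m * Poly_Mapping.lookup \<alpha> 0"
    using m by (simp_all add: algebra_simps)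
  moreover have "m * Poly_Mapping.lookup \<alpha> 0 \<le> d * m" using False by (simp add: mult.commute)
  ultimately show ?thesis by linarith
qed

lemma admissible_mono: "admissible d Q h \<Longrightarrow> j \<le> Q \<Longrightarrow> admissible d j h"
  using admissible_imp_le by (auto simp: admissible_def)

lemma blowup_step_blowup_monomial:
  assumes "\<forall>v\<ge>3. Poly_Mapping.lookup \<alpha> v = 0"
    and "d * Q \<le> Poly_Mapping.lookup \<alpha> 2 + Q * Poly_Mapping.lookup \<alpha> 0"
    and "d * Suc Q \<le> Poly_Mapping.lookup \<alpha> 2 + Suc Q * Poly_Mapping.lookup \<alpha> 0"
  shows "(blowup_monomial d Q \<alpha> + Poly_Mapping.single (evar (Suc Q))
        (Poly_Mapping.lookup (blowup_monomial d Q \<alpha>) (evar (Suc Q - 1))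
          + Poly_Mapping.lookup (blowup_monomial d Q \<alpha>) 0))
      - Poly_Mapping.single (evar (Suc Q)) d = blowup_monomial d (Suc Q) \<alpha>"
proof (rule poly_mapping_eqI)
  fix v
  have "Poly_Mapping.lookup (blowup_monomial d Q \<alpha>) (evar (Suc Q - 1)) = blowup_exponent d \<alpha> Q"
    using lookup_blowup_monomial_evar[OF assms(1), of Q Q d] by simp
  moreover have "blowup_exponent d \<alpha> Q + Poly_Mapping.lookup \<alpha> 0 - d = blowup_exponent d \<alpha> (Suc Q)"
    using assms(2,3) by (simp add: blowup_exponent_def algebra_simps)
  ultimately show "Poly_Mapping.lookup ((blowup_monomial d Q \<alpha> + Poly_Mapping.single (evar (Suc Q))
        (Poly_Mapping.lookup (blowup_monomial d Q \<alpha>) (evar (Suc Q - 1))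
          + Poly_Mapping.lookup (blowup_monomial d Q \<alpha>) 0))
      - Poly_Mapping.single (evar (Suc Q)) d) v = Poly_Mapping.lookup (blowup_monomial d (Suc Q) \<alpha>) v"
    using assms(1)
    by (cases "v = Q + 3"; cases Q)
       (auto simp: lookup_minus lookup_add lookup_single when_def lookup_blowup_monomial
          evar_def numeral_2_eq_2 blowup_exponent_def)
qed

lemma keys_chain:
  assumes "admissible d Q h"
  shows "Poly_Mapping.keys (chain d h Q) = blowup_monomial d Q ` Poly_Mapping.keys h"
  using assms
proof (induction Q)
  case 0
  then show ?case by (simp add: blowup_monomial_def)
next
  case (Suc Q)
  have adm: "admissible d Q h" using Suc.prems admissible_mono by auto
  let ?T = "\<lambda>\<alpha>. (\<alpha> + Poly_Mapping.single (evar (Suc Q))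
        (Poly_Mapping.lookup \<alpha> (evar (Suc Q - 1)) + Poly_Mapping.lookup \<alpha> 0))
      - Poly_Mapping.single (evar (Suc Q)) d"
  have step: "?T (blowup_monomial d Q \<alpha>) = blowup_monomial d (Suc Q) \<alpha>"
    if "\<alpha> \<in> Poly_Mapping.keys h" for \<alpha>
    using blowup_step_blowup_monomial[of \<alpha> d Q] Suc.prems adm that by (auto simp: admissible_def)
  have "inj_on ?T (blowup_monomial d Q ` Poly_Mapping.keys h)"
    using step inj_blowup_monomial[of d "Suc Q"] by (auto simp: inj_on_def dest: injD)
  then have "Poly_Mapping.keys (chain d h (Suc Q)) = ?T ` blowup_monomial d Q ` Poly_Mapping.keys h"
    unfolding chain.simps blowup_step_def Suc.IH[OF adm, symmetric] by (rule keys_remap)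
  also have "\<dots> = blowup_monomial d (Suc Q) ` Poly_Mapping.keys h"
    using step by (force simp: image_comp)
  finally show ?case .
qed

lemma nvec_chain:
  assumes "admissible d Q h" "q \<le> Q"
  shows "nvec (chain d h Q) q = Min ((\<lambda>\<alpha>. blowup_exponent d \<alpha> q) ` Poly_Mapping.keys h)"
  unfolding nvec_def keys_chain[OF assms(1)] image_comp
  using assms by (intro arg_cong[where f = Min] image_cong)
    (auto simp: admissible_def intro: lookup_blowup_monomial_evar)

lemma blowup_exponent_attains_nvec:
  assumes "admissible d Q h" "h \<noteq> 0" "q \<le> Q"
  shows "\<exists>\<alpha>\<in>Poly_Mapping.keys h. blowup_exponent d \<alpha> q = nvec (chain d h Q) q"
proof -
  have "nvec (chain d h Q) q \<in> (\<lambda>\<alpha>. blowup_exponent d \<alpha> q) ` Poly_Mapping.keys h"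
    unfolding nvec_chain[OF assms(1,3)] using assms(2) by (intro Min_in) auto
  then show ?thesis by force
qed

lemma nvec_chain_le:
  assumes "admissible d Q h" "q \<le> Q" "\<alpha> \<in> Poly_Mapping.keys h"
  shows "nvec (chain d h Q) q \<le> blowup_exponent d \<alpha> q"
  unfolding nvec_chain[OF assms(1,2)] using assms(3) by simp

lemma admissible_of_not_stop:
  assumes supp: "\<forall>\<alpha>\<in>Poly_Mapping.keys h. Poly_Mapping.keys \<alpha> \<subseteq> {0, 1, 2}"
    and not_stop: "\<forall>q<P. \<forall>\<sigma><d. Fnz h \<sigma> \<longrightarrow> \<not> mu d h q \<sigma> < d - \<sigma>"
  shows "admissible d P h"
proof -
  have supp3: "\<forall>v\<ge>3. Poly_Mapping.lookup \<alpha> v = 0" if "\<alpha> \<in> Poly_Mapping.keys h" for \<alpha>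
    using supp that by (force simp: in_keys_iff)
  have "Q \<le> P \<longrightarrow> admissible d Q h" for Q
  proof (induction Q)
    case 0
    then show ?case using supp3 by (simp add: admissible_def)
  next
    case (Suc Q)
    show ?case
    proof
      assume QP: "Suc Q \<le> P"
      then have adm: "admissible d Q h" using Suc by simp
      have "d * Suc Q \<le> Poly_Mapping.lookup \<alpha> 2 + Suc Q * Poly_Mapping.lookup \<alpha> 0"
        if \<alpha>: "\<alpha> \<in> Poly_Mapping.keys h" for \<alpha>
      proof (cases "d \<le> Poly_Mapping.lookup \<alpha> 0")
        case True
        then show ?thesis by (metis mult.commute mult_le_mono1 trans_le_add2)
      next
        case False
        \<comment> \<open>Not stopping at \<open>Q\<close> bounds the \<open>e\<^sub>Q\<close>-exponent of \<open>\<alpha>\<close> below by \<open>d - a\<close>,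
          which is exactly the admissibility inequality for \<open>Q + 1\<close>.\<close>
        let ?b = "Poly_Mapping.lookup \<alpha> 0"
        have "Fnz h ?b" unfolding Fnz_def using \<alpha> by blast
        then have "d - ?b \<le> mu d h Q ?b" using not_stop QP False by (meson Suc_le_lessD not_le not_less)
        also have "mu d h Q ?b \<le> Poly_Mapping.lookup (blowup_monomial d Q \<alpha>) (evar Q)"
          unfolding mu_def keys_chain[OF adm] using \<alpha>
          by (intro Min_le) (auto simp: lookup_blowup_monomial_low)
        also have "\<dots> = blowup_exponent d \<alpha> Q"
          using lookup_blowup_monomial_evar[OF supp3[OF \<alpha>]] by simp
        finally show ?thesis
          using admissible_imp_le[OF adm order.refl \<alpha>] False
          by (simp add: blowup_exponent_def algebra_simps)
      qed
      then show "admissible d (Suc Q) h" using supp3 by (auto simp: admissible_def)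
    qed
  qed
  then show ?thesis by simp
qed

lemma admissible_add: "admissible d Q p \<Longrightarrow> admissible d Q q \<Longrightarrow> admissible d Q (p + q)"
  unfolding admissible_def using keys_add[of p q] by blast

lemma admissible_mult:
  assumes "admissible d1 Q p" "admissible d2 Q q"
  shows "admissible (d1 + d2) Q (p * q)"
  unfolding admissible_def
proof
  fix \<gamma> assume "\<gamma> \<in> Poly_Mapping.keys (p * q)"
  then obtain \<alpha> \<beta> where \<gamma>: "\<gamma> = \<alpha> + \<beta>" and "\<alpha> \<in> Poly_Mapping.keys p" "\<beta> \<in> Poly_Mapping.keys q"
    using keys_mult[of p q] by blast
  then have "\<forall>v\<ge>3. Poly_Mapping.lookup \<alpha> v = 0" "d1 * Q \<le> Poly_Mapping.lookup \<alpha> 2 + Q * Poly_Mapping.lookup \<alpha> 0"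
    "\<forall>v\<ge>3. Poly_Mapping.lookup \<beta> v = 0" "d2 * Q \<le> Poly_Mapping.lookup \<beta> 2 + Q * Poly_Mapping.lookup \<beta> 0"
    using assms unfolding admissible_def by blast+
  then show "(\<forall>v\<ge>3. Poly_Mapping.lookup \<gamma> v = 0) \<and>
      (d1 + d2) * Q \<le> Poly_Mapping.lookup \<gamma> 2 + Q * Poly_Mapping.lookup \<gamma> 0"
    unfolding \<gamma> lookup_add by (simp add: add_mult_distrib add_mult_distrib2)
qed

lemma admissible_numeral: "admissible 0 Q (numeral n :: mpoly)"
proof -
  have "(numeral n :: mpoly) = Poly_Mapping.single 0 (numeral n)" by simp
  then have "Poly_Mapping.keys (numeral n :: mpoly) \<subseteq> {0}"
    by (metis keys_single empty_subsetI insert_subset order.refl subset_singletonD)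
  then show ?thesis unfolding admissible_def by auto
qed

lemma admissible_Disc:
  assumes "admissible 4 Q f" "admissible 6 Q g"
  shows "admissible 12 Q (Disc f g)"
proof -
  have "admissible (0 + (4 + 4 + 4)) Q (4 * (f * f * f))"
    "admissible (0 + (6 + 6)) Q (27 * (g * g))"
    using assms by (intro admissible_mult admissible_numeral; simp)+
  then show ?thesis
    unfolding Disc_def by (simp add: power3_eq_cube power2_eq_square admissible_add)
qed

section \<open>Base change\<close>

definition bc_monomial :: "nat \<Rightarrow> (nat \<Rightarrow>\<^sub>0 nat) \<Rightarrow> (nat \<Rightarrow>\<^sub>0 nat)" where
  "bc_monomial k \<alpha> = \<alpha> + Poly_Mapping.single 2 ((k - 1) * Poly_Mapping.lookup \<alpha> 2)"

lemma base_change_eq_remap: "base_change k h = remap (bc_monomial k) h"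
  unfolding base_change_def bc_monomial_def ..

lemma bc_monomial_add: "bc_monomial k (\<alpha> + \<beta>) = bc_monomial k \<alpha> + bc_monomial k \<beta>"
  unfolding bc_monomial_def by (simp add: lookup_add algebra_simps single_add)

lemma lookup_bc_monomial:
  "0 < k \<Longrightarrow> Poly_Mapping.lookup (bc_monomial k \<alpha>) v
    = (if v = 2 then k * Poly_Mapping.lookup \<alpha> 2 else Poly_Mapping.lookup \<alpha> v)"
  unfolding bc_monomial_def by (cases k) (auto simp: lookup_add lookup_single when_def)

lemma base_change_Disc: "base_change k (Disc f g) = Disc (base_change k f) (base_change k g)"
proof -
  have "bc_monomial k 0 = 0" by (simp add: bc_monomial_def)
  then show ?thesis
    unfolding base_change_eq_remap Disc_def
    by (simp only: power3_eq_cube power2_eq_square remap_add remap_mult[OF bc_monomial_add] remap_numeral)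
qed

lemma inj_bc_monomial:
  assumes "0 < k"
  shows "inj (bc_monomial k)"
proof
  fix x y assume eq: "bc_monomial k x = bc_monomial k y"
  have "Poly_Mapping.lookup x v = Poly_Mapping.lookup y v" for v
  proof -
    have "Poly_Mapping.lookup (bc_monomial k x) v = Poly_Mapping.lookup (bc_monomial k y) v"
      using eq by simp
    then show ?thesis
      unfolding lookup_bc_monomial[OF assms] using assms by (simp split: if_splits)
  qed
  then show "x = y" by (simp add: poly_mapping_eqI)
qed

lemma keys_base_change:
  assumes "0 < k"
  shows "Poly_Mapping.keys (base_change k h) = bc_monomial k ` Poly_Mapping.keys h"
  unfolding base_change_eq_remap by (intro keys_remap inj_on_subset[OF inj_bc_monomial[OF assms]]) simp

lemma admissible_base_change:
  assumes "admissible d Q h" "0 < k"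
  shows "admissible d (k * Q) (base_change k h)"
  unfolding admissible_def keys_base_change[OF assms(2)]
proof
  fix \<gamma> assume "\<gamma> \<in> bc_monomial k ` Poly_Mapping.keys h"
  then obtain \<alpha> where \<alpha>: "\<alpha> \<in> Poly_Mapping.keys h" "\<gamma> = bc_monomial k \<alpha>" by blast
  then have "\<forall>v\<ge>3. Poly_Mapping.lookup \<alpha> v = 0"
    "k * (d * Q) \<le> k * (Poly_Mapping.lookup \<alpha> 2 + Q * Poly_Mapping.lookup \<alpha> 0)"
    using assms(1) by (auto simp: admissible_def)
  then show "(\<forall>v\<ge>3. Poly_Mapping.lookup \<gamma> v = 0) \<and>
      d * (k * Q) \<le> Poly_Mapping.lookup \<gamma> 2 + k * Q * Poly_Mapping.lookup \<gamma> 0"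
    using \<alpha>(2) assms(2) by (auto simp: lookup_bc_monomial algebra_simps)
qed

lemma blowup_exponent_base_change:
  assumes "d * p \<le> Poly_Mapping.lookup \<alpha> 2 + p * Poly_Mapping.lookup \<alpha> 0"
    and "d * (p + 1) \<le> Poly_Mapping.lookup \<alpha> 2 + (p + 1) * Poly_Mapping.lookup \<alpha> 0"
    and "r \<le> k" "0 < k"
  shows "blowup_exponent d (bc_monomial k \<alpha>) (k * p + r)
    = (k - r) * blowup_exponent d \<alpha> p + r * blowup_exponent d \<alpha> (p + 1)"
proof -
  let ?a = "Poly_Mapping.lookup \<alpha> 2" and ?b = "Poly_Mapping.lookup \<alpha> 0"
  obtain X where X: "?a + p * ?b = X + d * p" using assms(1) le_Suc_ex by (metis add.commute)
  obtain Y where Y: "?a + (p + 1) * ?b = Y + d * (p + 1)" using assms(2) le_Suc_ex by (metis add.commute)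
  obtain s where s: "k = s + r" using assms(3) le_Suc_ex by (metis add.commute)
  have "s * (?a + p * ?b) + r * (?a + (p + 1) * ?b) = s * (X + d * p) + r * (Y + d * (p + 1))"
    using X Y by simp
  then have "k * ?a + (k * p + r) * ?b = (s * X + r * Y) + d * (k * p + r)"
    unfolding s by (simp add: algebra_simps)
  moreover have "blowup_exponent d \<alpha> p = X" "blowup_exponent d \<alpha> (p + 1) = Y"
    using X Y by (simp_all add: blowup_exponent_def)
  ultimately show ?thesis
    using s assms(4) by (simp add: blowup_exponent_def lookup_bc_monomial)
qed

section \<open>Removing the common powers of the \<open>e\<^sub>q\<close>\<close>

definition Dprime_shift :: "nat \<Rightarrow> mpoly \<Rightarrow> (nat \<Rightarrow>\<^sub>0 nat)" where
  "Dprime_shift Q D = (\<Sum>q\<le>Q. Poly_Mapping.single (evar q) (nvec D q))"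

lemma lookup_Dprime_shift:
  "Poly_Mapping.lookup (Dprime_shift Q D) v = (if 2 \<le> v \<and> v \<le> Q + 2 then nvec D (v - 2) else 0)"
proof (cases "2 \<le> v \<and> v \<le> Q + 2")
  case True
  then have "evar (v - 2) = v" unfolding evar_def by arith
  moreover have "(\<Sum>q\<le>Q. Poly_Mapping.lookup (Poly_Mapping.single (evar q) (nvec D q)) v)
      = (\<Sum>q\<in>{v - 2}. Poly_Mapping.lookup (Poly_Mapping.single (evar q) (nvec D q)) v)"
    using True by (intro sum.mono_neutral_right) (auto simp: lookup_single evar_def when_def)
  ultimately show ?thesis using True by (simp add: Dprime_shift_def lookup_sum)
qed (auto simp: Dprime_shift_def lookup_sum lookup_single evar_def when_def intro!: sum.neutral)

lemma nvec_le: "\<beta> \<in> Poly_Mapping.keys D \<Longrightarrow> nvec D q \<le> Poly_Mapping.lookup \<beta> (evar q)"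
  unfolding nvec_def by (intro Min_le) auto

lemma Dprime_shift_le:
  assumes "\<beta> \<in> Poly_Mapping.keys D"
  shows "Poly_Mapping.lookup (Dprime_shift Q D) v \<le> Poly_Mapping.lookup \<beta> v"
proof -
  have "2 \<le> v \<Longrightarrow> evar (v - 2) = v" unfolding evar_def by arith
  then show ?thesis using assms nvec_le[of \<beta> D "v - 2"] by (auto simp: lookup_Dprime_shift)
qed

lemma keys_Dprime:
  "Poly_Mapping.keys (Dprime Q D) = (\<lambda>\<beta>. \<beta> - Dprime_shift Q D) ` Poly_Mapping.keys D"
  unfolding Dprime_def Dprime_shift_def[symmetric]
proof (rule keys_remap, rule inj_onI)
  fix x y assume x: "x \<in> Poly_Mapping.keys D" and y: "y \<in> Poly_Mapping.keys D"
    and eq: "x - Dprime_shift Q D = y - Dprime_shift Q D"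
  have "Poly_Mapping.lookup x v = Poly_Mapping.lookup y v" for v
    using arg_cong[OF eq, of "\<lambda>\<alpha>. Poly_Mapping.lookup \<alpha> v"]
      Dprime_shift_le[OF x, of Q v] Dprime_shift_le[OF y, of Q v]
    by (simp add: lookup_minus)
  then show "x = y" by (simp add: poly_mapping_eqI)
qed

lemma lookup_minus_Dprime_shift:
  "q \<le> Q \<Longrightarrow> Poly_Mapping.lookup (\<beta> - Dprime_shift Q D) (evar q) = Poly_Mapping.lookup \<beta> (evar q) - nvec D q"
  by (simp add: lookup_minus lookup_Dprime_shift evar_def)

lemma Dprime_exponent_zero:
  assumes "D \<noteq> 0" "q \<le> Q"
  shows "\<exists>\<beta>\<in>Poly_Mapping.keys (Dprime Q D). Poly_Mapping.lookup \<beta> (evar q) = 0"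
proof -
  have "nvec D q \<in> (\<lambda>\<beta>. Poly_Mapping.lookup \<beta> (evar q)) ` Poly_Mapping.keys D"
    unfolding nvec_def using assms(1) by (intro Min_in) auto
  then obtain \<beta> where "\<beta> \<in> Poly_Mapping.keys D" "Poly_Mapping.lookup \<beta> (evar q) = nvec D q"
    by auto
  then show ?thesis
    using assms(2) by (intro bexI[of _ "\<beta> - Dprime_shift Q D"]) (auto simp: keys_Dprime lookup_minus_Dprime_shift)
qed

lemma Min_exponent_pos:
  assumes "\<forall>\<alpha>\<in>Poly_Mapping.keys D. 0 < Poly_Mapping.lookup \<alpha> u \<or> 0 < Poly_Mapping.lookup \<alpha> v"
    and "\<exists>\<alpha>\<in>Poly_Mapping.keys D. Poly_Mapping.lookup \<alpha> v = 0"
  shows "0 < Min {Poly_Mapping.lookup \<alpha> u | \<alpha>. \<alpha> \<in> Poly_Mapping.keys D \<and> Poly_Mapping.lookup \<alpha> v = 0}"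
proof -
  let ?S = "{Poly_Mapping.lookup \<alpha> u | \<alpha>. \<alpha> \<in> Poly_Mapping.keys D \<and> Poly_Mapping.lookup \<alpha> v = 0}"
  have "finite ?S"
    by (rule finite_subset[of _ "(\<lambda>\<alpha>. Poly_Mapping.lookup \<alpha> u) ` Poly_Mapping.keys D"]) auto
  moreover have "?S \<noteq> {}" using assms(2) by blast
  ultimately have "Min ?S \<in> ?S" by (rule Min_in)
  then show ?thesis using assms(1) by force
qed

section \<open>Minima of finitely many affine functions\<close>

definition min_affine :: "('a \<Rightarrow> real) \<Rightarrow> ('a \<Rightarrow> real) \<Rightarrow> 'a set \<Rightarrow> real \<Rightarrow> real" where
  "min_affine c d I x = Min ((\<lambda>\<alpha>. c \<alpha> * x + d \<alpha>) ` I)"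

text \<open>The kinks of \<open>min_affine c d I\<close> lie among these points.\<close>

definition crossings :: "('a \<Rightarrow> real) \<Rightarrow> ('a \<Rightarrow> real) \<Rightarrow> 'a set \<Rightarrow> real set" where
  "crossings c d I = {x. \<exists>\<alpha>\<in>I. \<exists>\<beta>\<in>I. (c \<alpha>, d \<alpha>) \<noteq> (c \<beta>, d \<beta>) \<and> c \<alpha> * x + d \<alpha> = c \<beta> * x + d \<beta>}"

lemma min_affine_scale:
  assumes "finite I" "I \<noteq> {}" "(K::real) \<ge> 0"
  shows "min_affine c (\<lambda>\<alpha>. K * d \<alpha>) I (K * x) = K * min_affine c d I x"
proof -
  have "min_affine c (\<lambda>\<alpha>. K * d \<alpha>) I (K * x) = Min ((\<lambda>y. K * y) ` (\<lambda>\<alpha>. c \<alpha> * x + d \<alpha>) ` I)"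
    unfolding min_affine_def image_comp by (rule arg_cong[where f = Min]) (auto simp: algebra_simps)
  also have "\<dots> = K * min_affine c d I x"
    unfolding min_affine_def using assms
    by (intro mono_Min_commute[symmetric]) (auto intro: monoI mult_left_mono)
  finally show ?thesis .
qed

lemma crossingsE:
  assumes "x \<in> crossings c d I"
  obtains \<alpha> \<beta> where "\<alpha> \<in> I" "\<beta> \<in> I" "x = (d \<beta> - d \<alpha>) / (c \<alpha> - c \<beta>)"
proof -
  obtain \<alpha> \<beta> where \<alpha>\<beta>: "\<alpha> \<in> I" "\<beta> \<in> I" "(c \<alpha>, d \<alpha>) \<noteq> (c \<beta>, d \<beta>)"
    and eq: "c \<alpha> * x + d \<alpha> = c \<beta> * x + d \<beta>"
    using assms unfolding crossings_def by blast
  have "c \<alpha> \<noteq> c \<beta>"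
  proof
    assume "c \<alpha> = c \<beta>"
    then show False using \<alpha>\<beta>(3) eq by simp
  qed
  then have "x = (d \<beta> - d \<alpha>) / (c \<alpha> - c \<beta>)" using eq by (simp add: field_simps)
  with \<alpha>\<beta> that show ?thesis by blast
qed

lemma affine_sign_change_root:
  fixes a b z w :: real
  assumes "a * z + b > 0" "a * w + b < 0"
  shows "\<exists>t. a * t + b = 0 \<and> min z w < t \<and> t < max z w"
proof -
  have a: "a \<noteq> 0" using assms by auto
  then have "a * (- b / a) + b = 0" by simp
  moreover have "min z w < - b / a \<and> - b / a < max z w"
  proof (cases "a > 0")
    case True
    then have "w < - b / a" "- b / a < z" using assms by (simp_all add: field_simps)
    then show ?thesis by auto
  next
    case False
    then have "a < 0" using a by simp
    then have "- b / a < w" "z < - b / a" using assms by (simp_all add: field_simps)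
    then show ?thesis by auto
  qed
  ultimately show ?thesis by blast
qed

context
  fixes c d :: "'a \<Rightarrow> real" and I :: "'a set"
  assumes fin: "finite I" and ne: "I \<noteq> {}"
begin

lemma min_affine_le: "\<alpha> \<in> I \<Longrightarrow> min_affine c d I x \<le> c \<alpha> * x + d \<alpha>"
  unfolding min_affine_def using fin by (intro Min_le) auto

lemma min_affine_attained: "\<exists>\<alpha>\<in>I. min_affine c d I x = c \<alpha> * x + d \<alpha>"
proof -
  have "min_affine c d I x \<in> (\<lambda>\<alpha>. c \<alpha> * x + d \<alpha>) ` I"
    unfolding min_affine_def using fin ne by (intro Min_in) auto
  then show ?thesis by auto
qed

lemma min_affine_eqI:
  "\<alpha> \<in> I \<Longrightarrow> (\<And>\<beta>. \<beta> \<in> I \<Longrightarrow> c \<alpha> * x + d \<alpha> \<le> c \<beta> * x + d \<beta>) \<Longrightarrow> min_affine c d I x = c \<alpha> * x + d \<alpha>"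
  by (metis min_affine_attained min_affine_le antisym)

lemma finite_crossings: "finite (crossings c d I)"
proof -
  have "crossings c d I \<subseteq> (\<lambda>(\<alpha>, \<beta>). (d \<beta> - d \<alpha>) / (c \<alpha> - c \<beta>)) ` (I \<times> I)"
  proof
    fix x assume "x \<in> crossings c d I"
    then obtain \<alpha> \<beta> where "\<alpha> \<in> I" "\<beta> \<in> I" "x = (d \<beta> - d \<alpha>) / (c \<alpha> - c \<beta>)"
      by (rule crossingsE)
    then show "x \<in> (\<lambda>(\<alpha>, \<beta>). (d \<beta> - d \<alpha>) / (c \<alpha> - c \<beta>)) ` (I \<times> I)" by force
  qed
  then show ?thesis using fin by (meson finite_SigmaI finite_imageI finite_subset)
qed

lemma crossings_subset_Rats:
  assumes "\<And>\<alpha>. \<alpha> \<in> I \<Longrightarrow> c \<alpha> \<in> \<rat>" "\<And>\<alpha>. \<alpha> \<in> I \<Longrightarrow> d \<alpha> \<in> \<rat>"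
  shows "crossings c d I \<subseteq> \<rat>"
proof
  fix x assume "x \<in> crossings c d I"
  then obtain \<alpha> \<beta> where "\<alpha> \<in> I" "\<beta> \<in> I" "x = (d \<beta> - d \<alpha>) / (c \<alpha> - c \<beta>)"
    by (rule crossingsE)
  then show "x \<in> \<rat>" using assms by simp
qed

lemma concave_on_min_affine: "convex S \<Longrightarrow> concave_on S (min_affine c d I)"
  unfolding concave_on_iff
proof (intro conjI ballI allI impI)
  fix x y u v :: real assume uv: "u \<ge> 0" "v \<ge> 0" "u + v = 1"
  obtain \<alpha> where \<alpha>: "\<alpha> \<in> I" "min_affine c d I (u *\<^sub>R x + v *\<^sub>R y) = c \<alpha> * (u *\<^sub>R x + v *\<^sub>R y) + d \<alpha>"
    using min_affine_attained by blast
  have "u * min_affine c d I x + v * min_affine c d I y \<le> u * (c \<alpha> * x + d \<alpha>) + v * (c \<alpha> * y + d \<alpha>)"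
    using min_affine_le[OF \<alpha>(1)] uv by (intro add_mono mult_left_mono) auto
  also have "\<dots> = c \<alpha> * (u *\<^sub>R x + v *\<^sub>R y) + (u + v) * d \<alpha>"
    by (simp add: algebra_simps)
  finally show "u * min_affine c d I x + v * min_affine c d I y \<le> min_affine c d I (u *\<^sub>R x + v *\<^sub>R y)"
    using \<alpha> uv(3) by simp
qed

lemma crossing_between:
  assumes \<alpha>: "\<alpha> \<in> I" "min_affine c d I z = c \<alpha> * z + d \<alpha>" and \<beta>: "\<beta> \<in> I"
    and less: "c \<beta> * w + d \<beta> < c \<alpha> * w + d \<alpha>"
  shows "\<exists>t\<in>crossings c d I. t = z \<or> (min z w < t \<and> t < max z w)"
proof -
  have ge: "c \<beta> * z + d \<beta> \<ge> c \<alpha> * z + d \<alpha>" using min_affine_le[OF \<beta>, of z] \<alpha> by simp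
  have ne: "(c \<alpha>, d \<alpha>) \<noteq> (c \<beta>, d \<beta>)" using less by auto
  show ?thesis
  proof (cases "c \<beta> * z + d \<beta> = c \<alpha> * z + d \<alpha>")
    case True
    then have "z \<in> crossings c d I" unfolding crossings_def using \<alpha> \<beta> ne by force
    then show ?thesis by blast
  next
    case False
    then have "(c \<beta> - c \<alpha>) * z + (d \<beta> - d \<alpha>) > 0" "(c \<beta> - c \<alpha>) * w + (d \<beta> - d \<alpha>) < 0"
      using ge less by (simp_all add: algebra_simps)
    then obtain t where t: "(c \<beta> - c \<alpha>) * t + (d \<beta> - d \<alpha>) = 0" "min z w < t" "t < max z w"
      using affine_sign_change_root by blast
    then have "t \<in> crossings c d I"
      unfolding crossings_def using \<alpha>(1) \<beta> ne by (force simp: algebra_simps)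
    then show ?thesis using t by blast
  qed
qed

lemma min_affine_linear_between_crossings:
  assumes "x < y" "{x<..<y} \<inter> crossings c d I = {}"
  shows "\<exists>\<alpha>\<in>I. \<forall>w\<in>{x..y}. min_affine c d I w = c \<alpha> * w + d \<alpha>"
proof -
  let ?m = "(x + y) / 2"
  obtain \<alpha> where \<alpha>: "\<alpha> \<in> I" "min_affine c d I ?m = c \<alpha> * ?m + d \<alpha>"
    using min_affine_attained by blast
  have "min_affine c d I w = c \<alpha> * w + d \<alpha>" if w: "w \<in> {x..y}" for w
  proof (rule min_affine_eqI[OF \<alpha>(1)], rule ccontr)
    fix \<beta> assume "\<beta> \<in> I" "\<not> c \<alpha> * w + d \<alpha> \<le> c \<beta> * w + d \<beta>"
    then obtain t where "t \<in> crossings c d I" "t = ?m \<or> (min ?m w < t \<and> t < max ?m w)"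
      using crossing_between[OF \<alpha>] by (meson not_le)
    moreover from calculation have "t \<in> {x<..<y}"
      using w assms(1) by (auto simp: min_def max_def split: if_splits)
    ultimately show False using assms(2) by blast
  qed
  then show ?thesis using \<alpha>(1) by blast
qed

lemma piecewise_linear_on_min_affine:
  assumes "a < b"
  shows "piecewise_linear_on a b (min_affine c d I)"
  unfolding piecewise_linear_on_def
proof (intro exI[of _ "{a, b} \<union> (crossings c d I \<inter> {a..b})"] conjI ballI impI)
  show "finite ({a, b} \<union> (crossings c d I \<inter> {a..b}))" using finite_crossings by simp
  show "{a, b} \<union> crossings c d I \<inter> {a..b} \<subseteq> {a..b}" using assms by auto
  fix x y assume "x \<in> {a, b} \<union> crossings c d I \<inter> {a..b}" "y \<in> {a, b} \<union> crossings c d I \<inter> {a..b}"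
    and xy: "x < y \<and> {x<..<y} \<inter> ({a, b} \<union> crossings c d I \<inter> {a..b}) = {}"
  then have "{x<..<y} \<inter> crossings c d I = {}" using assms by auto
  then show "\<exists>c' d'. \<forall>z\<in>{x..y}. min_affine c d I z = c' * z + d'"
    using min_affine_linear_between_crossings xy by blast
qed auto

lemma locally_linear_at_min_affine:
  assumes "x \<notin> crossings c d I"
  shows "locally_linear_at (min_affine c d I) x"
proof -
  obtain \<alpha> where \<alpha>: "\<alpha> \<in> I" "min_affine c d I x = c \<alpha> * x + d \<alpha>"
    using min_affine_attained by blast
  obtain \<epsilon> where \<epsilon>: "\<epsilon> > 0" "\<And>t. t \<in> crossings c d I \<Longrightarrow> \<epsilon> \<le> \<bar>t - x\<bar>"
  proof
    let ?\<epsilon> = "Min (insert 1 ((\<lambda>t. \<bar>t - x\<bar>) ` crossings c d I))"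
    show "?\<epsilon> > 0" using assms finite_crossings by auto
    show "?\<epsilon> \<le> \<bar>t - x\<bar>" if "t \<in> crossings c d I" for t
      using that finite_crossings by (intro Min_le) auto
  qed
  have "min_affine c d I z = c \<alpha> * z + d \<alpha>" if z: "\<bar>z - x\<bar> < \<epsilon>" for z
  proof (rule min_affine_eqI[OF \<alpha>(1)], rule ccontr)
    fix \<beta> assume "\<beta> \<in> I" "\<not> c \<alpha> * z + d \<alpha> \<le> c \<beta> * z + d \<beta>"
    then obtain t where t: "t \<in> crossings c d I" "t = x \<or> (min x z < t \<and> t < max x z)"
      using crossing_between[OF \<alpha>] by (meson not_le)
    then have "\<bar>t - x\<bar> < \<epsilon>" using assms z by (auto simp: min_def max_def split: if_splits)
    then show False using \<epsilon>(2)[OF t(1)] by simp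
  qed
  then show ?thesis unfolding locally_linear_at_def using \<epsilon>(1) by blast
qed

lemma min_affine_locally_eq_line:
  assumes "locally_linear_at (min_affine c d I) x" "\<alpha> \<in> I" "min_affine c d I x = c \<alpha> * x + d \<alpha>"
  shows "\<exists>\<epsilon>>0. \<forall>z. \<bar>z - x\<bar> < \<epsilon> \<longrightarrow> min_affine c d I z = c \<alpha> * z + d \<alpha>"
proof -
  obtain \<epsilon> c0 d0 where \<epsilon>: "\<epsilon> > 0" "\<forall>z. \<bar>z - x\<bar> < \<epsilon> \<longrightarrow> min_affine c d I z = c0 * z + d0"
    using assms(1) unfolding locally_linear_at_def by blast
  have x: "c0 * x + d0 = c \<alpha> * x + d \<alpha>" using \<epsilon> assms(3) by simp
  have le: "c0 * z + d0 \<le> c \<alpha> * z + d \<alpha>" if "\<bar>z - x\<bar> < \<epsilon>" for z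
    using \<epsilon> that min_affine_le[OF assms(2), of z] by simp
  have "c0 * (x + \<epsilon> / 2) + d0 \<le> c \<alpha> * (x + \<epsilon> / 2) + d \<alpha>"
    "c0 * (x - \<epsilon> / 2) + d0 \<le> c \<alpha> * (x - \<epsilon> / 2) + d \<alpha>"
    using le \<epsilon>(1) by simp_all
  then have "c0 * (\<epsilon> / 2) \<le> c \<alpha> * (\<epsilon> / 2)" "c \<alpha> * (\<epsilon> / 2) \<le> c0 * (\<epsilon> / 2)"
    using x by (simp_all add: algebra_simps)
  then have "c0 = c \<alpha>" using \<epsilon>(1) by (metis antisym half_gt_zero mult_le_cancel_right_pos)
  then show ?thesis using \<epsilon> x by auto
qed

text \<open>Moving right from \<open>m\<close> through points of local linearity, the line minimal at \<open>m\<close> stays minimal: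
  otherwise take the first point \<open>ts\<close> where another line overtakes it; both lines are then minimal
  around \<open>ts\<close>, forcing equal slopes.\<close>

lemma min_affine_line_extends_right:
  assumes \<alpha>: "\<alpha> \<in> I" "min_affine c d I m = c \<alpha> * m + d \<alpha>" and "m < x1"
    and ll: "\<forall>z\<in>{m..<x1}. locally_linear_at (min_affine c d I) z"
  shows "min_affine c d I x1 = c \<alpha> * x1 + d \<alpha>"
proof (rule ccontr)
  assume neq: "min_affine c d I x1 \<noteq> c \<alpha> * x1 + d \<alpha>"
  define R where "R = {\<beta>\<in>I. c \<beta> * x1 + d \<beta> < c \<alpha> * x1 + d \<alpha>}"
  define tt where "tt \<beta> = (d \<alpha> - d \<beta>) / (c \<beta> - c \<alpha>)" for \<beta>
  have "R \<noteq> {}"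
    using neq min_affine_attained[of x1] min_affine_le[OF \<alpha>(1), of x1] unfolding R_def by force
  moreover have "finite R" using fin unfolding R_def by simp
  ultimately obtain \<beta>s where \<beta>s: "\<beta>s \<in> R" "\<And>\<beta>. \<beta> \<in> R \<Longrightarrow> tt \<beta>s \<le> tt \<beta>"
  proof -
    assume that: "\<And>\<beta>s. \<beta>s \<in> R \<Longrightarrow> (\<And>\<beta>. \<beta> \<in> R \<Longrightarrow> tt \<beta>s \<le> tt \<beta>) \<Longrightarrow> thesis"
    assume "R \<noteq> {}" "finite R"
    then have "Min (tt ` R) \<in> tt ` R" by (intro Min_in) auto
    then obtain \<beta>s where "\<beta>s \<in> R" "tt \<beta>s = Min (tt ` R)" by auto
    then show thesis using \<open>finite R\<close> by (intro that) auto
  qed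
  have R: "c \<beta> < c \<alpha> \<and> m \<le> tt \<beta> \<and> tt \<beta> < x1 \<and> c \<beta> * tt \<beta> + d \<beta> = c \<alpha> * tt \<beta> + d \<alpha>"
    if "\<beta> \<in> R" for \<beta>
  proof -
    have \<beta>: "\<beta> \<in> I" and lt: "c \<beta> * x1 + d \<beta> < c \<alpha> * x1 + d \<alpha>" using that unfolding R_def by auto
    have ge: "c \<beta> * m + d \<beta> \<ge> c \<alpha> * m + d \<alpha>" using min_affine_le[OF \<beta>, of m] \<alpha> by simp
    have "(c \<beta> - c \<alpha>) * (x1 - m) < 0" using ge lt by (simp add: algebra_simps)
    then have neg: "c \<beta> - c \<alpha> < 0" using \<open>m < x1\<close> by (simp add: mult_less_0_iff)
    then show ?thesis
      unfolding tt_def using ge lt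
      by (simp add: le_divide_eq divide_less_eq field_simps)
  qed
  let ?ts = "tt \<beta>s"
  have ts: "m \<le> ?ts" "?ts < x1" using R[OF \<beta>s(1)] by auto
  have \<alpha>_min: "min_affine c d I ?ts = c \<alpha> * ?ts + d \<alpha>"
  proof (rule min_affine_eqI[OF \<alpha>(1)], rule ccontr)
    fix \<gamma> assume \<gamma>: "\<gamma> \<in> I" "\<not> c \<alpha> * ?ts + d \<alpha> \<le> c \<gamma> * ?ts + d \<gamma>"
    have "c \<gamma> * m + d \<gamma> \<ge> c \<alpha> * m + d \<alpha>" using min_affine_le[OF \<gamma>(1), of m] \<alpha> by simp
    then have "(c \<gamma> - c \<alpha>) * (?ts - m) < 0" using \<gamma>(2) by (simp add: algebra_simps)
    then have neg: "c \<gamma> - c \<alpha> < 0" and "m < ?ts" using ts by (auto simp: mult_less_0_iff)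
    then have "(c \<gamma> - c \<alpha>) * (x1 - ?ts) < 0" using ts by (simp add: mult_neg_pos)
    then have "\<gamma> \<in> R" using \<gamma> unfolding R_def by (simp add: algebra_simps)
    moreover have "tt \<gamma> < t" if "c \<gamma> * t + d \<gamma> < c \<alpha> * t + d \<alpha>" for t
      unfolding tt_def using that neg by (simp add: divide_less_eq algebra_simps)
    then have "tt \<gamma> < ?ts" using \<gamma>(2) by simp
    ultimately show False using \<beta>s(2) by fastforce
  qed
  have \<beta>s_min: "min_affine c d I ?ts = c \<beta>s * ?ts + d \<beta>s" using \<alpha>_min R[OF \<beta>s(1)] by simp
  have "locally_linear_at (min_affine c d I) ?ts" using ll ts by simp
  then obtain e1 e2 where e: "e1 > 0" "\<forall>z. \<bar>z - ?ts\<bar> < e1 \<longrightarrow> min_affine c d I z = c \<alpha> * z + d \<alpha>"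
    "e2 > 0" "\<forall>z. \<bar>z - ?ts\<bar> < e2 \<longrightarrow> min_affine c d I z = c \<beta>s * z + d \<beta>s"
    using min_affine_locally_eq_line \<alpha>(1) \<alpha>_min \<beta>s_min \<beta>s(1) unfolding R_def by blast
  define h where "h = min e1 e2 / 2"
  have h: "h > 0" "\<bar>(?ts + h) - ?ts\<bar> < e1" "\<bar>(?ts + h) - ?ts\<bar> < e2"
    using e by (auto simp: h_def)
  then have "c \<alpha> * (?ts + h) + d \<alpha> = c \<beta>s * (?ts + h) + d \<beta>s"
    using e(2,4) by metis
  moreover have "c \<alpha> * ?ts + d \<alpha> = c \<beta>s * ?ts + d \<beta>s" using \<alpha>_min \<beta>s_min by simp
  ultimately have "c \<alpha> * h = c \<beta>s * h" by algebra
  then show False using h(1) R[OF \<beta>s(1)] by simp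
qed

end

lemma min_affine_reflect: "min_affine (\<lambda>\<alpha>. - c \<alpha>) d I x = min_affine c d I (- x)"
  unfolding min_affine_def by simp

lemma locally_linear_at_reflect:
  assumes "locally_linear_at F (- x)"
  shows "locally_linear_at (\<lambda>z. F (- z)) x"
proof -
  obtain \<epsilon> c0 d0 where \<epsilon>: "\<epsilon> > 0" "\<forall>z. \<bar>z - - x\<bar> < \<epsilon> \<longrightarrow> F z = c0 * z + d0"
    using assms unfolding locally_linear_at_def by blast
  have "F (- z) = (- c0) * z + d0" if "\<bar>z - x\<bar> < \<epsilon>" for z
  proof -
    have "\<bar>- z - - x\<bar> < \<epsilon>" using that by arith
    then show ?thesis using \<epsilon>(2) by simp
  qed
  then show ?thesis unfolding locally_linear_at_def using \<epsilon>(1) by blast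
qed

lemma min_affine_line_extends_left:
  assumes "finite I" "I \<noteq> {}" "\<alpha> \<in> I" "min_affine c d I m = c \<alpha> * m + d \<alpha>" "x0 < m"
    and ll: "\<forall>z\<in>{x0<..m}. locally_linear_at (min_affine c d I) z"
  shows "min_affine c d I x0 = c \<alpha> * x0 + d \<alpha>"
proof -
  have "\<forall>z\<in>{- m..< - x0}. locally_linear_at (min_affine (\<lambda>\<alpha>. - c \<alpha>) d I) z"
  proof
    fix z assume "z \<in> {- m..< - x0}"
    then have "locally_linear_at (min_affine c d I) (- z)" using ll by auto
    then have "locally_linear_at (\<lambda>w. min_affine c d I (- w)) z" by (rule locally_linear_at_reflect)
    moreover have "(\<lambda>w. min_affine c d I (- w)) = min_affine (\<lambda>\<alpha>. - c \<alpha>) d I"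
      by (rule ext) (rule min_affine_reflect[symmetric])
    ultimately show "locally_linear_at (min_affine (\<lambda>\<alpha>. - c \<alpha>) d I) z" by simp
  qed
  moreover have "min_affine (\<lambda>\<alpha>. - c \<alpha>) d I (- m) = - c \<alpha> * (- m) + d \<alpha>"
    using assms(4) by (simp add: min_affine_reflect)
  ultimately have "min_affine (\<lambda>\<alpha>. - c \<alpha>) d I (- x0) = - c \<alpha> * (- x0) + d \<alpha>"
    using assms(5) by - (rule min_affine_line_extends_right[OF assms(1-3)], auto)
  then show ?thesis by (simp add: min_affine_reflect)
qed

lemma min_affine_common_line_iff:
  assumes fin: "finite I" and ne: "I \<noteq> {}" and "x0 < x1"
  shows "(\<exists>\<alpha>\<in>I. min_affine c d I x0 = c \<alpha> * x0 + d \<alpha> \<and> min_affine c d I x1 = c \<alpha> * x1 + d \<alpha>)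
     \<longleftrightarrow> (\<forall>z\<in>{x0<..<x1}. locally_linear_at (min_affine c d I) z)"
proof
  assume "\<exists>\<alpha>\<in>I. min_affine c d I x0 = c \<alpha> * x0 + d \<alpha> \<and> min_affine c d I x1 = c \<alpha> * x1 + d \<alpha>"
  then obtain \<alpha> where \<alpha>: "\<alpha> \<in> I" "min_affine c d I x0 = c \<alpha> * x0 + d \<alpha>"
    "min_affine c d I x1 = c \<alpha> * x1 + d \<alpha>" by blast
  have segment: "min_affine c d I w = c \<alpha> * w + d \<alpha>" if "x0 \<le> w" "w \<le> x1" for w
  proof (rule min_affine_eqI[OF fin ne \<alpha>(1)])
    fix \<beta> assume \<beta>: "\<beta> \<in> I"
    have "0 \<le> (c \<beta> * x0 + d \<beta> - (c \<alpha> * x0 + d \<alpha>)) * (x1 - w) + (c \<beta> * x1 + d \<beta> - (c \<alpha> * x1 + d \<alpha>)) * (w - x0)"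
      using min_affine_le[OF fin ne \<beta>, of c d x0] min_affine_le[OF fin ne \<beta>, of c d x1] \<alpha> that
      by (intro add_nonneg_nonneg mult_nonneg_nonneg) auto
    also have "\<dots> = (c \<beta> * w + d \<beta> - (c \<alpha> * w + d \<alpha>)) * (x1 - x0)"
      by (simp add: algebra_simps)
    finally show "c \<alpha> * w + d \<alpha> \<le> c \<beta> * w + d \<beta>" using \<open>x0 < x1\<close> by (simp add: zero_le_mult_iff)
  qed
  show "\<forall>z\<in>{x0<..<x1}. locally_linear_at (min_affine c d I) z"
  proof
    fix z assume "z \<in> {x0<..<x1}"
    then have "min (z - x0) (x1 - z) > 0" "\<forall>w. \<bar>w - z\<bar> < min (z - x0) (x1 - z) \<longrightarrow> min_affine c d I w = c \<alpha> * w + d \<alpha>"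
      using segment by (auto simp: abs_less_iff)
    then show "locally_linear_at (min_affine c d I) z" unfolding locally_linear_at_def by blast
  qed
next
  assume ll: "\<forall>z\<in>{x0<..<x1}. locally_linear_at (min_affine c d I) z"
  let ?m = "(x0 + x1) / 2"
  obtain \<alpha> where \<alpha>: "\<alpha> \<in> I" "min_affine c d I ?m = c \<alpha> * ?m + d \<alpha>"
    using min_affine_attained[OF fin ne] by blast
  then show "\<exists>\<alpha>\<in>I. min_affine c d I x0 = c \<alpha> * x0 + d \<alpha> \<and> min_affine c d I x1 = c \<alpha> * x1 + d \<alpha>"
    using min_affine_line_extends_right[OF fin ne \<alpha>] min_affine_line_extends_left[OF fin ne \<alpha>]
      ll \<open>x0 < x1\<close> by auto
qed

section \<open>Grids of rational breakpoints\<close>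

lemma rat_denom_dvd_iff:
  assumes "x \<in> \<rat>"
  shows "0 < rat_denom x" "real j * x \<in> \<int> \<longleftrightarrow> rat_denom x dvd j"
proof -
  obtain q where q: "x = of_rat q" using assms Rats_cases by blast
  have "(THE q. x = of_rat q) = q" using q by (rule the_equality) (simp add: q)
  moreover obtain a b where ab: "quotient_of q = (a, b)" by (cases "quotient_of q")
  ultimately have denom: "rat_denom x = nat b" unfolding rat_denom_def by simp
  have b: "b > 0" "coprime a b" using quotient_of_denom_pos[OF ab] quotient_of_coprime[OF ab] by auto
  have x: "x = real_of_int a / real_of_int b"
    using q quotient_of_div[OF ab] by (simp add: of_rat_divide)
  show "0 < rat_denom x" using denom b by simp
  have "real j * x \<in> \<int> \<longleftrightarrow> b dvd int j"
  proof
    assume "real j * x \<in> \<int>"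
    then obtain n where "real j * x = of_int n" using Ints_cases by blast
    then have "real_of_int (int j * a) = real_of_int (n * b)" using x b by (simp add: field_simps)
    then have "b dvd int j * a" by (metis dvd_triv_right of_int_eq_iff)
    then show "b dvd int j" using b(2) by (simp add: coprime_commute coprime_dvd_mult_left_iff)
  next
    assume "b dvd int j"
    then obtain m where "int j = b * m" by blast
    then have "real j = real_of_int b * real_of_int m" by (metis of_int_mult of_int_of_nat_eq)
    then have "real j * x = real_of_int (m * a)" using x b by (simp add: field_simps)
    then show "real j * x \<in> \<int>" by simp
  qed
  also have "\<dots> \<longleftrightarrow> nat b dvd j" using b by (metis int_dvd_int_iff int_nat_eq less_imp_le)
  finally show "real j * x \<in> \<int> \<longleftrightarrow> rat_denom x dvd j" using denom by simp
qed

lemma Lcm_rat_denom: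
  fixes B :: "real set"
  assumes "finite B" "B \<subseteq> \<rat>"
  shows "0 < Lcm (rat_denom ` B)" "(\<forall>x\<in>B. real j * x \<in> \<int>) \<longleftrightarrow> Lcm (rat_denom ` B) dvd j"
proof -
  have "0 \<notin> rat_denom ` B" using assms(2) rat_denom_dvd_iff(1) by (metis imageE less_irrefl subsetD)
  then have "Lcm (rat_denom ` B) \<noteq> 0" using assms(1) by (subst Lcm_0_iff) auto
  then show "0 < Lcm (rat_denom ` B)" by simp
  show "(\<forall>x\<in>B. real j * x \<in> \<int>) \<longleftrightarrow> Lcm (rat_denom ` B) dvd j"
  proof
    assume "\<forall>x\<in>B. real j * x \<in> \<int>"
    then show "Lcm (rat_denom ` B) dvd j"
      using assms(2) rat_denom_dvd_iff(2) by (intro Lcm_least) blast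
  next
    assume "Lcm (rat_denom ` B) dvd j"
    then show "\<forall>x\<in>B. real j * x \<in> \<int>"
      using assms(2) rat_denom_dvd_iff(2) by (meson dvd_Lcm dvd_trans image_eqI subsetD)
  qed
qed

lemma Least_integral_multiple_eq_Lcm:
  fixes B :: "real set"
  assumes "finite B" "B \<subseteq> \<rat>"
  shows "(LEAST j::nat. 0 < j \<and> (\<forall>x\<in>B. real j * x \<in> \<int>)) = Lcm (rat_denom ` B)"
  using Lcm_rat_denom[OF assms] by (intro Least_equality) (auto dest: dvd_imp_le)

lemma locally_linear_on_grid_iff:
  fixes F :: "real \<Rightarrow> real" and k :: nat
  assumes "0 < k"
  shows "(\<forall>r<k. \<forall>z\<in>{real r / real k<..<(real r + 1) / real k}. locally_linear_at F z)
     \<longleftrightarrow> (\<forall>x\<in>{0<..<1}. \<not> locally_linear_at F x \<longrightarrow> real k * x \<in> \<int>)"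
proof -
  have kpos: "real k > 0" using assms by simp
  have piece: "z \<in> {real r / real k<..<(real r + 1) / real k} \<longleftrightarrow> real r < real k * z \<and> real k * z < real r + 1"
    for r z using kpos by (auto simp: field_simps)
  show ?thesis
  proof
    assume lin: "\<forall>r<k. \<forall>z\<in>{real r / real k<..<(real r + 1) / real k}. locally_linear_at F z"
    show "\<forall>x\<in>{0<..<1}. \<not> locally_linear_at F x \<longrightarrow> real k * x \<in> \<int>"
    proof (intro ballI impI, rule ccontr)
      fix x assume x: "x \<in> {0<..<1}" "\<not> locally_linear_at F x" and ni: "real k * x \<notin> \<int>"
      define r where "r = nat \<lfloor>real k * x\<rfloor>"
      have "0 < real k * x" "real k * x < real k" using x kpos by auto
      then have "0 \<le> \<lfloor>real k * x\<rfloor>" "\<lfloor>real k * x\<rfloor> < int k" by (simp_all add: floor_less_iff)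
      then have r: "real r = of_int \<lfloor>real k * x\<rfloor>" "r < k" unfolding r_def by (simp_all add: nat_less_iff)
      have "of_int \<lfloor>real k * x\<rfloor> \<noteq> real k * x" using ni by (metis Ints_of_int)
      then have "real r < real k * x" "real k * x < real r + 1" using r(1) by linarith+
      then show False using lin r(2) x(2) piece by blast
    qed
  next
    assume grid: "\<forall>x\<in>{0<..<1}. \<not> locally_linear_at F x \<longrightarrow> real k * x \<in> \<int>"
    show "\<forall>r<k. \<forall>z\<in>{real r / real k<..<(real r + 1) / real k}. locally_linear_at F z"
    proof (intro allI impI ballI, rule ccontr)
      fix r z assume r: "r < k" and "z \<in> {real r / real k<..<(real r + 1) / real k}"
        and nl: "\<not> locally_linear_at F z"
      then have z: "real r < real k * z" "real k * z < real r + 1" using piece by blast+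
      moreover have "real r + 1 \<le> real k" using r by simp
      ultimately have "0 < real k * z" "real k * z < real k * 1" by linarith+
      then have "z \<in> {0<..<1}" using kpos by (simp add: zero_less_mult_iff)
      then have "real k * z \<in> \<int>" using grid nl by blast
      then obtain m where "real k * z = of_int m" by (elim Ints_cases)
      then have "int r < m" "m < int r + 1" using z by linarith+
      then show False by linarith
    qed
  qed
qed

section \<open>The edge between two consecutive exceptional curves\<close>

lemma keys_Dprime_chain:
  assumes "admissible d Q h"
  shows "Poly_Mapping.keys (Dprime Q (chain d h Q))
    = (\<lambda>\<alpha>. blowup_monomial d Q \<alpha> - Dprime_shift Q (chain d h Q)) ` Poly_Mapping.keys h"
  unfolding keys_Dprime keys_chain[OF assms] image_comp comp_def ..

lemma lookup_Dprime_chain_monomial: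
  assumes "admissible d Q h" "\<alpha> \<in> Poly_Mapping.keys h" "q \<le> Q"
  shows "Poly_Mapping.lookup (blowup_monomial d Q \<alpha> - Dprime_shift Q (chain d h Q)) (evar q)
    = blowup_exponent d \<alpha> q - nvec (chain d h Q) q"
  using assms lookup_blowup_monomial_evar[of \<alpha> q Q d]
  by (simp add: lookup_minus_Dprime_shift admissible_def)

locale blowup_edge =
  fixes d Q p :: nat and D :: mpoly
  assumes admissible: "admissible d Q D" and nonzero: "D \<noteq> 0" and edge: "p < Q"
begin

text \<open>For the monomial \<open>M\<^sub>m\<close> of \<open>\<Delta>'\<close> coming from the monomial \<open>\<alpha>\<close> of \<open>D\<close>, \<open>exp_p \<alpha>\<close> and
  \<open>exp_p1 \<alpha>\<close> are the paper's \<open>\<epsilon>\<^sub>p\<^sub>,\<^sub>m\<close> and \<open>\<epsilon>\<^sub>p\<^sub>+\<^sub>1\<^sub>,\<^sub>m\<close>; \<open>edge_line k\<close> and \<open>edge_min k\<close> are the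
  paper's \<open>L\<^sub>m\<close> and \<open>M\<close>.\<close>

definition exp_p :: "(nat \<Rightarrow>\<^sub>0 nat) \<Rightarrow> nat" where
  "exp_p \<alpha> = blowup_exponent d \<alpha> p - nvec (chain d D Q) p"

definition exp_p1 :: "(nat \<Rightarrow>\<^sub>0 nat) \<Rightarrow> nat" where
  "exp_p1 \<alpha> = blowup_exponent d \<alpha> (p + 1) - nvec (chain d D Q) (p + 1)"

definition edge_line :: "real \<Rightarrow> (nat \<Rightarrow>\<^sub>0 nat) \<Rightarrow> real \<Rightarrow> real" where
  "edge_line K \<alpha> r = (K - r) * real (exp_p \<alpha>) + r * real (exp_p1 \<alpha>)"

definition edge_min :: "real \<Rightarrow> real \<Rightarrow> real" where
  "edge_min K r = Min ((\<lambda>\<alpha>. edge_line K \<alpha> r) ` Poly_Mapping.keys D)"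

lemma edge_line_eq: "edge_line K \<alpha> r = (real (exp_p1 \<alpha>) - real (exp_p \<alpha>)) * r + K * real (exp_p \<alpha>)"
  by (simp add: edge_line_def algebra_simps)

lemma edge_min_eq_min_affine:
  "edge_min K = min_affine (\<lambda>\<alpha>. real (exp_p1 \<alpha>) - real (exp_p \<alpha>)) (\<lambda>\<alpha>. K * real (exp_p \<alpha>)) (Poly_Mapping.keys D)"
  by (simp add: fun_eq_iff edge_min_def min_affine_def edge_line_eq)

lemma edge_min_1:
  "edge_min 1 = min_affine (\<lambda>\<alpha>. real (exp_p1 \<alpha>) - real (exp_p \<alpha>)) (\<lambda>\<alpha>. real (exp_p \<alpha>)) (Poly_Mapping.keys D)"
  by (simp add: edge_min_eq_min_affine)

lemma finite_keys_nonempty: "finite (Poly_Mapping.keys D)" "Poly_Mapping.keys D \<noteq> {}"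
  using nonzero by simp_all

lemma chain_nonzero: "chain d D Q \<noteq> 0"
  using keys_chain[OF admissible] nonzero by force

lemma Min_Dprime_chain_eq_edge_min:
  "Min ((\<lambda>\<beta>. (K - r) * real (Poly_Mapping.lookup \<beta> (evar p)) + r * real (Poly_Mapping.lookup \<beta> (evar (p + 1))))
      ` Poly_Mapping.keys (Dprime Q (chain d D Q))) = edge_min K r"
  unfolding keys_Dprime_chain[OF admissible] image_comp edge_min_def
  using edge by (intro arg_cong[where f = Min] image_cong)
    (simp_all add: lookup_Dprime_chain_monomial[OF admissible] edge_line_def exp_p_def exp_p1_def)

lemma edge_min_1_0: "edge_min 1 0 = 0"
proof -
  obtain \<alpha> where "\<alpha> \<in> Poly_Mapping.keys D" "exp_p \<alpha> = 0"
    using blowup_exponent_attains_nvec[OF admissible nonzero, of p] edge by (auto simp: exp_p_def)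
  then show ?thesis
    unfolding edge_min_eq_min_affine by (subst min_affine_eqI[OF finite_keys_nonempty]) auto
qed

lemma edge_min_1_1: "edge_min 1 1 = 0"
proof -
  obtain \<alpha> where "\<alpha> \<in> Poly_Mapping.keys D" "exp_p1 \<alpha> = 0"
    using blowup_exponent_attains_nvec[OF admissible nonzero, of "p + 1"] edge by (auto simp: exp_p1_def)
  then show ?thesis
    unfolding edge_min_eq_min_affine by (subst min_affine_eqI[OF finite_keys_nonempty]) auto
qed

lemma edge_min_scale: "0 \<le> K \<Longrightarrow> edge_min K (K * x) = K * edge_min 1 x"
  unfolding edge_min_eq_min_affine using min_affine_scale[OF finite_keys_nonempty] by simp

lemma piecewise_linear_on_edge_min: "0 < K \<Longrightarrow> piecewise_linear_on 0 K (edge_min K)"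
  unfolding edge_min_eq_min_affine by (rule piecewise_linear_on_min_affine[OF finite_keys_nonempty])

lemma concave_on_edge_min: "convex S \<Longrightarrow> concave_on S (edge_min K)"
  unfolding edge_min_eq_min_affine by (rule concave_on_min_affine[OF finite_keys_nonempty])

lemma edge_breakpoints_finite_Rats:
  "finite {x. \<not> locally_linear_at (edge_min 1) x}" "{x. \<not> locally_linear_at (edge_min 1) x} \<subseteq> \<rat>"
proof -
  let ?c = "\<lambda>\<alpha>. real (exp_p1 \<alpha>) - real (exp_p \<alpha>)" and ?a = "\<lambda>\<alpha>. real (exp_p \<alpha>)"
  have sub: "{x. \<not> locally_linear_at (edge_min 1) x} \<subseteq> crossings ?c ?a (Poly_Mapping.keys D)"
    unfolding edge_min_1 using locally_linear_at_min_affine[OF finite_keys_nonempty] by blast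
  then show "finite {x. \<not> locally_linear_at (edge_min 1) x}"
    using finite_crossings[OF finite_keys_nonempty] by (rule finite_subset)
  show "{x. \<not> locally_linear_at (edge_min 1) x} \<subseteq> \<rat>"
    using sub crossings_subset_Rats[OF finite_keys_nonempty, of ?c ?a] by auto
qed

context
  fixes k :: nat
  assumes k: "0 < k"
begin

lemma base_change_index_le: "r \<le> k \<Longrightarrow> k * p + r \<le> k * Q"
proof -
  assume "r \<le> k"
  then have "k * p + r \<le> k * (p + 1)" by simp
  also have "\<dots> \<le> k * Q" using edge by (intro mult_le_mono2) simp
  finally show ?thesis .
qed

lemma blowup_exponent_base_change_edge:
  assumes "\<alpha> \<in> Poly_Mapping.keys D" "r \<le> k"
  shows "real (blowup_exponent d (bc_monomial k \<alpha>) (k * p + r))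
    = edge_line (real k) \<alpha> (real r)
      + (real (k - r) * real (nvec (chain d D Q) p) + real r * real (nvec (chain d D Q) (p + 1)))"
proof -
  have "p \<le> Q" "p + 1 \<le> Q" using edge by simp_all
  then have "blowup_exponent d (bc_monomial k \<alpha>) (k * p + r)
      = (k - r) * blowup_exponent d \<alpha> p + r * blowup_exponent d \<alpha> (p + 1)"
    using admissible_imp_le[OF admissible _ assms(1)] assms(2) k by (intro blowup_exponent_base_change)
  moreover have "blowup_exponent d \<alpha> p = exp_p \<alpha> + nvec (chain d D Q) p"
    "blowup_exponent d \<alpha> (p + 1) = exp_p1 \<alpha> + nvec (chain d D Q) (p + 1)"
    using nvec_chain_le[OF admissible _ assms(1)] \<open>p \<le> Q\<close> \<open>p + 1 \<le> Q\<close>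
    by (simp_all add: exp_p_def exp_p1_def)
  ultimately have "real (blowup_exponent d (bc_monomial k \<alpha>) (k * p + r))
      = real (k - r) * (real (exp_p \<alpha>) + real (nvec (chain d D Q) p))
        + real r * (real (exp_p1 \<alpha>) + real (nvec (chain d D Q) (p + 1)))"
    by simp
  then show ?thesis using assms(2) by (simp add: edge_line_def of_nat_diff algebra_simps)
qed

lemma nvec_base_change_chain:
  assumes "r \<le> k"
  shows "real (nvec (chain d (base_change k D) (k * Q)) (k * p + r))
    = real (k - r) * real (nvec (chain d D Q) p) + real r * real (nvec (chain d D Q) (p + 1))
      + edge_min (real k) (real r)"
proof -
  let ?C = "real (k - r) * real (nvec (chain d D Q) p) + real r * real (nvec (chain d D Q) (p + 1))"
  have "k * p + r \<le> k * Q" using base_change_index_le assms by simp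
  then have "real (nvec (chain d (base_change k D) (k * Q)) (k * p + r))
      = real (Min ((\<lambda>\<alpha>. blowup_exponent d (bc_monomial k \<alpha>) (k * p + r)) ` Poly_Mapping.keys D))"
    by (simp add: nvec_chain[OF admissible_base_change[OF admissible k]] keys_base_change[OF k] image_comp comp_def)
  also have "\<dots> = Min ((\<lambda>\<alpha>. real (blowup_exponent d (bc_monomial k \<alpha>) (k * p + r))) ` Poly_Mapping.keys D)"
    using finite_keys_nonempty by (subst mono_Min_commute) (auto intro: monoI simp: image_comp)
  also have "\<dots> = Min ((\<lambda>\<alpha>. edge_line (real k) \<alpha> (real r) + ?C) ` Poly_Mapping.keys D)"
    using assms by (intro arg_cong[where f = Min] image_cong) (simp_all add: blowup_exponent_base_change_edge)
  also have "\<dots> = edge_min (real k) (real r) + ?C"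
    unfolding edge_min_def using finite_keys_nonempty by (rule Min_add_commute)
  finally show ?thesis by simp
qed

lemma lookup_Dprime_base_change:
  assumes "\<alpha> \<in> Poly_Mapping.keys D" "r \<le> k"
  shows "real (Poly_Mapping.lookup (blowup_monomial d (k * Q) (bc_monomial k \<alpha>)
      - Dprime_shift (k * Q) (chain d (base_change k D) (k * Q))) (evar (k * p + r)))
    = edge_line (real k) \<alpha> (real r) - edge_min (real k) (real r)"
proof -
  let ?h = "base_change k D"
  have adm: "admissible d (k * Q) ?h" and key: "bc_monomial k \<alpha> \<in> Poly_Mapping.keys ?h"
    using admissible_base_change[OF admissible k] keys_base_change[OF k] assms(1) by auto
  have "k * p + r \<le> k * Q" using base_change_index_le assms by simp
  then show ?thesis
    using nvec_chain_le[OF adm _ key] nvec_base_change_chain[OF assms(2)]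
      blowup_exponent_base_change_edge[OF assms]
    by (simp add: lookup_Dprime_chain_monomial[OF adm key] of_nat_diff)
qed

lemma special_fiber_base_change_iff:
  assumes "r < k"
  shows "\<not> special_fiber (Dprime (k * Q) (chain d (base_change k D) (k * Q))) (k * p + r)
    \<longleftrightarrow> (\<forall>z\<in>{real r / real k<..<(real r + 1) / real k}. locally_linear_at (edge_min 1) z)"
proof -
  let ?c = "\<lambda>\<alpha>. real (exp_p1 \<alpha>) - real (exp_p \<alpha>)" and ?a = "\<lambda>\<alpha>. real (exp_p \<alpha>)"
  have line_scale: "edge_line (real k) \<alpha> (real k * x) = real k * (?c \<alpha> * x + ?a \<alpha>)" for \<alpha> x
    by (simp add: edge_line_eq algebra_simps)
  have minimal_at: "real (Poly_Mapping.lookup (blowup_monomial d (k * Q) (bc_monomial k \<alpha>)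
      - Dprime_shift (k * Q) (chain d (base_change k D) (k * Q))) (evar (k * p + j))) = 0
    \<longleftrightarrow> edge_min 1 (real j / real k) = ?c \<alpha> * (real j / real k) + ?a \<alpha>"
    if "\<alpha> \<in> Poly_Mapping.keys D" "j \<le> k" for \<alpha> j
    using lookup_Dprime_base_change[OF that] edge_min_scale[of "real k" "real j / real k"]
      line_scale[of \<alpha> "real j / real k"] k by auto
  have "\<not> special_fiber (Dprime (k * Q) (chain d (base_change k D) (k * Q))) (k * p + r)
    \<longleftrightarrow> (\<exists>\<alpha>\<in>Poly_Mapping.keys D.
        Poly_Mapping.lookup (blowup_monomial d (k * Q) (bc_monomial k \<alpha>)
          - Dprime_shift (k * Q) (chain d (base_change k D) (k * Q))) (evar (k * p + r)) = 0 \<and>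
        Poly_Mapping.lookup (blowup_monomial d (k * Q) (bc_monomial k \<alpha>)
          - Dprime_shift (k * Q) (chain d (base_change k D) (k * Q))) (evar (k * p + (r + 1))) = 0)"
    unfolding special_fiber_def keys_Dprime_chain[OF admissible_base_change[OF admissible k]]
      keys_base_change[OF k] by (simp add: add.assoc)
  also have "\<dots> \<longleftrightarrow> (\<exists>\<alpha>\<in>Poly_Mapping.keys D. edge_min 1 (real r / real k) = ?c \<alpha> * (real r / real k) + ?a \<alpha>
        \<and> edge_min 1 ((real r + 1) / real k) = ?c \<alpha> * ((real r + 1) / real k) + ?a \<alpha>)"
    using minimal_at[of _ r] minimal_at[of _ "r + 1"] assms by (intro bex_cong) (simp_all add: add_ac)
  also have "\<dots> \<longleftrightarrow> (\<forall>z\<in>{real r / real k<..<(real r + 1) / real k}. locally_linear_at (edge_min 1) z)"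
    unfolding edge_min_1 using k
    by (intro min_affine_common_line_iff[OF finite_keys_nonempty]) (simp add: divide_strict_right_mono)
  finally show ?thesis .
qed

lemma no_special_fibers_iff:
  "(\<forall>pb\<in>{k * p..<k * (p + 1)}. \<not> special_fiber (Dprime (k * Q) (chain d (base_change k D) (k * Q))) pb)
    \<longleftrightarrow> (\<forall>x\<in>{0<..<1}. \<not> locally_linear_at (edge_min 1) x \<longrightarrow> real k * x \<in> \<int>)"
proof -
  have "(\<forall>pb\<in>{k * p..<k * (p + 1)}. P pb) \<longleftrightarrow> (\<forall>r<k. P (k * p + r))" for P
  proof
    assume "\<forall>r<k. P (k * p + r)"
    moreover have "pb - k * p < k" "pb = k * p + (pb - k * p)" if "pb \<in> {k * p..<k * (p + 1)}" for pb
      using that by auto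
    ultimately show "\<forall>pb\<in>{k * p..<k * (p + 1)}. P pb" by metis
  qed simp
  then show ?thesis
    using special_fiber_base_change_iff locally_linear_on_grid_iff[OF k] by auto
qed

end

end

theorem lemma2:
  fixes f g Dl D' Dbl Db' :: mpoly and P p k eps0 eps1 k0 :: nat
    and Mb :: "nat \<Rightarrow> real \<Rightarrow> real" and BP :: "real set"
  assumes hf: "Poly_Mapping.keys f \<subseteq> {\<alpha>. Poly_Mapping.keys \<alpha> \<subseteq> {0,1,2} \<and> Poly_Mapping.lookup \<alpha> 0 + Poly_Mapping.lookup \<alpha> 1 = 8}"
    and hg: "Poly_Mapping.keys g \<subseteq> {\<alpha>. Poly_Mapping.keys \<alpha> \<subseteq> {0,1,2} \<and> Poly_Mapping.lookup \<alpha> 0 + Poly_Mapping.lookup \<alpha> 1 = 12}"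
    and hab: "\<not> (s_order f \<ge> 4 \<and> s_order g \<ge> 6)"
    and hcls: "\<forall>l\<ge>1. ord3 l f \<ge> 4 \<and> ord3 l g \<ge> 6 \<and> ord3 l (Disc f g) \<ge> 12 \<and> (ord3 l f = 4 \<or> ord3 l g = 6)"
    and hDelta: "Disc f g \<noteq> 0"
    and hP: "stop_cond f g P" "\<forall>q<P. \<not> stop_cond f g q"
    and hstand: "(\<exists>\<sigma><4. Fnz f \<sigma> \<and> mu 4 f P \<sigma> = 0) \<or> (\<exists>\<sigma><6. Fnz g \<sigma> \<and> mu 6 g P \<sigma> = 0)"
    and hp: "p < P"
    and hk: "0 < k"
    and Dl_def: "Dl = chain 12 (Disc f g) P"
    and D'_def: "D' = Dprime P Dl"
    and Dbl_def: "Dbl = chain 12 (Disc (base_change k f) (base_change k g)) (k * P)"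
    and Db'_def: "Db' = Dprime (k * P) Dbl"
    and eps0_def: "eps0 = Min {Poly_Mapping.lookup \<alpha> (evar p) | \<alpha>. \<alpha> \<in> Poly_Mapping.keys D' \<and> Poly_Mapping.lookup \<alpha> (evar (p + 1)) = 0}"
    and eps1_def: "eps1 = Min {Poly_Mapping.lookup \<alpha> (evar (p + 1)) | \<alpha>. \<alpha> \<in> Poly_Mapping.keys D' \<and> Poly_Mapping.lookup \<alpha> (evar p) = 0}"
    and Mb_def: "Mb = (\<lambda>(K::nat) (r::real). Min ((\<lambda>\<alpha>. (real K - r) * real (Poly_Mapping.lookup \<alpha> (evar p))
                 + r * real (Poly_Mapping.lookup \<alpha> (evar (p + 1)))) ` Poly_Mapping.keys D'))"
    and BP_def: "BP = {x \<in> {0<..<1}. \<not> locally_linear_at (Mb 1) x}"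
    and k0_def: "k0 = (LEAST j::nat. 0 < j \<and> (\<forall>x\<in>BP. real j * x \<in> \<int>))"
  shows "(special_fiber D' p \<longrightarrow> eps0 > 0 \<and> eps1 > 0)
    \<and> (\<forall>r\<le>k. real (nvec Dbl (k * p + r))
          = real (k - r) * real (nvec Dl p) + real r * real (nvec Dl (p + 1)) + Mb k (real r))
    \<and> piecewise_linear_on 0 (real k) (Mb k) \<and> concave_on {0..real k} (Mb k)
    \<and> (\<forall>r\<in>{0..1}. Mb k (real k * r) = real k * Mb 1 r)
    \<and> Mb 1 0 = 0 \<and> Mb 1 1 = 0
    \<and> finite BP \<and> BP \<subseteq> \<rat>
    \<and> ((\<forall>pb\<in>{k * p..<k * (p + 1)}. \<not> special_fiber Db' pb) \<longleftrightarrow> (\<forall>x\<in>BP. real k * x \<in> \<int>))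
    \<and> ((\<forall>x\<in>BP. real k * x \<in> \<int>) \<longleftrightarrow> k0 dvd k)
    \<and> k0 = Lcm (rat_denom ` BP)"
proof -
  have "\<forall>q<P. \<forall>\<sigma><4. Fnz f \<sigma> \<longrightarrow> \<not> mu 4 f q \<sigma> < 4 - \<sigma>" "\<forall>q<P. \<forall>\<sigma><6. Fnz g \<sigma> \<longrightarrow> \<not> mu 6 g q \<sigma> < 6 - \<sigma>"
    using hP(2) unfolding stop_cond_def by blast+
  then have "admissible 12 P (Disc f g)"
    using hf hg by (intro admissible_Disc admissible_of_not_stop) blast+
  then interpret blowup_edge 12 P p "Disc f g"
    using hDelta hp by unfold_locales
  have Mb: "Mb = (\<lambda>K. edge_min (real K))"
    unfolding Mb_def D'_def Dl_def Min_Dprime_chain_eq_edge_min ..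
  have Dbl: "Dbl = chain 12 (base_change k (Disc f g)) (k * P)"
    unfolding Dbl_def base_change_Disc ..
  have BP: "BP \<subseteq> {x. \<not> locally_linear_at (edge_min 1) x}"
    unfolding BP_def Mb by auto
  then have fin: "finite BP" and rat: "BP \<subseteq> \<rat>"
    using edge_breakpoints_finite_Rats finite_subset by blast+
  have "special_fiber D' p \<longrightarrow> eps0 > 0 \<and> eps1 > 0"
    using Dprime_exponent_zero[OF chain_nonzero, of p] Dprime_exponent_zero[OF chain_nonzero, of "p + 1"] hp
    unfolding special_fiber_def eps0_def eps1_def D'_def Dl_def
    by (auto intro!: Min_exponent_pos)
  moreover have "\<forall>r\<le>k. real (nvec Dbl (k * p + r))
      = real (k - r) * real (nvec Dl p) + real r * real (nvec Dl (p + 1)) + Mb k (real r)"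
    unfolding Mb Dbl Dl_def using nvec_base_change_chain[OF hk] by blast
  moreover have "piecewise_linear_on 0 (real k) (Mb k)" "concave_on {0..real k} (Mb k)"
    "\<forall>r\<in>{0..1}. Mb k (real k * r) = real k * Mb 1 r" "Mb 1 0 = 0" "Mb 1 1 = 0"
    unfolding Mb using hk
    by (simp_all add: piecewise_linear_on_edge_min concave_on_edge_min edge_min_scale edge_min_1_0 edge_min_1_1)
  moreover have "(\<forall>pb\<in>{k * p..<k * (p + 1)}. \<not> special_fiber Db' pb) \<longleftrightarrow> (\<forall>x\<in>BP. real k * x \<in> \<int>)"
    unfolding Db'_def Dbl no_special_fibers_iff[OF hk] BP_def Mb by auto
  moreover have "k0 = Lcm (rat_denom ` BP)" "(\<forall>x\<in>BP. real k * x \<in> \<int>) \<longleftrightarrow> k0 dvd k"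
    unfolding k0_def Least_integral_multiple_eq_Lcm[OF fin rat] using Lcm_rat_denom(2)[OF fin rat] by simp_all
  ultimately show ?thesis using fin rat by blast
qed

end
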